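(* Let $s\in\mathbb{N}$ and $p,q\in[1,\infty]$, and assume $\alpha\ge 1/p$ if $q=1$ and $\alpha>1/p$ if $q>1$. Let $m\ge 1$, let $P$ be a $(t,m,s)$-net in base $b$, and put $N:=|P|=b^m$. Then there exists a constant $C$, independent of $N$, such that $$e^{\mathrm{wor}}(Q_P,\mathcal{H}_{\mathrm{wav},\alpha,s,p,q})\le C\,N^{-\alpha}\ln(N)^{\frac{s-1}{q'}},$$ where $1/q+1/q'=1$. In particular, for $q=1$, $$e^{\mathrm{wor}}(Q_P,\mathcal{H}_{\mathrm{wav},\alpha,s,p,1})\le C\,N^{-\alpha}.$$
   Context: Conventions: $1/\infty=0$ and $r^{1/\infty}=1$ for all real $r$; $p'$, $q'$ denote conjugate exponents. Fix an integer base $b\ge2$. Put $\Delta_{-1}=\{0\}$, $\Delta_j=\{0,1,\dots,b^j-1\}$ for $j\in\mathbb{N}_0$, $\nabla_0=\{0\}$ and $\nabla_j=\{0,1,\dots,b-1\}$ for $j\ge1$. Univariate Haar functions on $[0,1]$: $\psi^0_{0,0}=1_{[0,1)}$ and, for $j\ge1$, $i\in\nabla_j$, $k\in\Delta_{j-1}$, $\psi^j_{i,k}(x)=b^{j/2-1}\big(b\,1_{[b^{-j}(bk+i),\,b^{-j}(bk+i+1))}(x)-1_{[b^{1-j}k,\,b^{1-j}(k+1))}(x)\big)$. For $\mathbf{j}\in\mathbb{N}_0^s$ let $|\mathbf{j}|=j_1+\dots+j_s$, $\nabla_{\mathbf{j}}=\nabla_{j_1}\times\dots\times\nabla_{j_s}$,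 $\Delta_{\mathbf{j}-\mathbf{1}}=\Delta_{j_1-1}\times\dots\times\Delta_{j_s-1}$, and $\Psi^{\mathbf{j}}_{\mathbf{i},\mathbf{k}}(\mathbf{x})=\prod_{\ell=1}^s\psi^{j_\ell}_{i_\ell,k_\ell}(x_\ell)$. Write $\langle f,g\rangle=\int_{[0,1]^s}fg$. Haar wavelet space: for $p\in[1,\infty]$, $\alpha\in\mathbb{R}$, $q\in[1,\infty)$, and $f\in L_1([0,1]^s)$ put $\|f\|^q_{\mathrm{wav},\alpha,s,p,q}=\sum_{L=0}^\infty b^{q(\alpha-1/p+1/2)L}\sum_{|\mathbf{j}|=L}\Big(\sum_{\mathbf{k}\in\Delta_{\mathbf{j}-\mathbf{1}}}\sum_{\mathbf{i}\in\nabla_{\mathbf{j}}}|\langle f,\Psi^{\mathbf{j}}_{\mathbf{i},\mathbf{k}}\rangle|^p\Big)^{q/p}$ (with the inner $\ell_p$-sum replaced by a maximum if $p=\infty$), and $\mathcal{H}_{\mathrm{wav},\alpha,s,p,q}=\{f\in L_1([0,1]^s):\|f\|_{\mathrm{wav},\alpha,s,p,q}<\infty\}$. For $q=\infty$, $\|f\|_{\mathrm{wav},\alpha,s,p,\infty}=\sup_{\mathbf{j}\in\mathbb{N}_0^s}b^{(\alpha-1/p+1/2)|\mathbf{j}|}\big(\sum_{\mathbf{k}}\sum_{\mathbf{i}}|\langle f,\Psi^{\mathbf{j}}_{\mathbf{i},\mathbf{k}}\rangle|^p\big)^{1/p}$, and $\mathcal{H}_{\mathrm{wav},\alpha,s,p,\infty}$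 consists of those $f\in L_1$ with finite norm whose wavelet series $\mathcal{S}(f)=\sum_{\mathbf{j}}\sum_{\mathbf{k}}\sum_{\mathbf{i}}\langle f,\Psi^{\mathbf{j}}_{\mathbf{i},\mathbf{k}}\rangle\Psi^{\mathbf{j}}_{\mathbf{i},\mathbf{k}}$ converges pointwise and equals $f$ a.e. Under the stated conditions on $\alpha$, for every $f$ in the space the series $\mathcal{S}(f)(\mathbf{x})$ converges absolutely at every $\mathbf{x}\in[0,1]^s$ and equals $f$ a.e.; each $f$ is identified with $\mathcal{S}(f)$, so point evaluation is well defined. Nets: for $t,m\in\mathbb{N}_0$, a finite point set $P\subset[0,1)^s$ is a $(t,m,s)$-net in base $b$ if every elementary interval $\prod_{\ell=1}^s[a_\ell b^{-d_\ell},(a_\ell+1)b^{-d_\ell})$ with $d_\ell\in\mathbb{N}_0$, $0\le a_\ell<b^{d_\ell}$, of volume $b^{t-m}$ contains exactly $b^t$ points of $P$; then $|P|=b^m$. The QMC cubature is $Q_P(f)=b^{-m}\sum_{\mathbf{p}\in P}f(\mathbf{p})$. For a normed function space $X$, $e^{\mathrm{wor}}(Q,X)=\sup\{|\int_{[0,1]^s}f(\mathbf{x})\,d\mathbf{x}-Q(f)|: f\in X,\ \|f\|_X\le1\}$. *)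

theory Defs
  imports "HOL-Analysis.Analysis"
begin

definition einv :: "ereal \<Rightarrow> real" where
  "einv p = (if p = \<infinity> then 0 else 1 / real_of_ereal p)"

text \<open>Index sets: nabla b j = \<nabla>_j, Delta b j = \<Delta>_{j-1} (with \<Delta>_{-1} = {0}).\<close>
definition nabla :: "nat \<Rightarrow> nat \<Rightarrow> nat set" where
  "nabla b j = (if j = 0 then {0} else {0..<b})"

definition Delta :: "nat \<Rightarrow> nat \<Rightarrow> nat set" where
  "Delta b j = (if j = 0 then {0} else {0..<b ^ (j - 1)})"

definition haar1 :: "nat \<Rightarrow> nat \<Rightarrow> nat \<Rightarrow> nat \<Rightarrow> real \<Rightarrow> real" where
  "haar1 b j i k x =
    (if j = 0 then (indicator {0..<1} x :: real)
     else real b powr (real j / 2 - 1) *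
       (real b * (indicator {(real b * real k + real i) / real b ^ j ..<
                             (real b * real k + real i + 1) / real b ^ j} x :: real)
        - (indicator {real k / real b ^ (j - 1) ..< (real k + 1) / real b ^ (j - 1)} x :: real)))"

text \<open>Multivariate Haar functions; the dimension s is CARD('n).\<close>
definition haar :: "nat \<Rightarrow> ('n::finite \<Rightarrow> nat) \<Rightarrow> ('n \<Rightarrow> nat) \<Rightarrow> ('n \<Rightarrow> nat) \<Rightarrow> real^'n \<Rightarrow> real" where
  "haar b j i k x = (\<Prod>l\<in>UNIV. haar1 b (j l) (i l) (k l) (x $ l))"

definition unit_cube :: "(real^'n::finite) set" where
  "unit_cube = {x. \<forall>l. 0 \<le> x $ l \<and> x $ l \<le> 1}"

definition haar_coeff :: "nat \<Rightarrow> (real^'n::finite \<Rightarrow> real) \<Rightarrow> ('n \<Rightarrow> nat) \<Rightarrow> ('n \<Rightarrow> nat) \<Rightarrow> ('n \<Rightarrow> nat) \<Rightarrow> real" where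
  "haar_coeff b f j i k = (LINT x|lebesgue_on unit_cube. f x * haar b j i k x)"

definition haar_index :: "nat \<Rightarrow> ('n::finite \<Rightarrow> nat) \<Rightarrow> (('n \<Rightarrow> nat) \<times> ('n \<Rightarrow> nat)) set" where
  "haar_index b j = {(i, k). \<forall>l. i l \<in> nabla b (j l) \<and> k l \<in> Delta b (j l)}"

definition level_norm :: "nat \<Rightarrow> ereal \<Rightarrow> (real^'n::finite \<Rightarrow> real) \<Rightarrow> ('n \<Rightarrow> nat) \<Rightarrow> real" where
  "level_norm b p f j =
    (if p = \<infinity> then Max ((\<lambda>(i, k). \<bar>haar_coeff b f j i k\<bar>) ` haar_index b j)
     else (\<Sum>(i, k)\<in>haar_index b j. \<bar>haar_coeff b f j i k\<bar> powr real_of_ereal p)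
            powr (1 / real_of_ereal p))"

definition wav_term :: "nat \<Rightarrow> real \<Rightarrow> ereal \<Rightarrow> ereal \<Rightarrow> (real^'n::finite \<Rightarrow> real) \<Rightarrow> nat \<Rightarrow> real" where
  "wav_term b \<alpha> p q f L =
    real b powr (real_of_ereal q * (\<alpha> - einv p + 1/2) * real L) *
    (\<Sum>j\<in>{j::'n \<Rightarrow> nat. sum j UNIV = L}. level_norm b p f j powr real_of_ereal q)"

definition wav_level_weighted :: "nat \<Rightarrow> real \<Rightarrow> ereal \<Rightarrow> (real^'n::finite \<Rightarrow> real) \<Rightarrow> ('n \<Rightarrow> nat) \<Rightarrow> real" where
  "wav_level_weighted b \<alpha> p f j =
     real b powr ((\<alpha> - einv p + 1/2) * real (sum j UNIV)) * level_norm b p f j"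

definition wav_norm :: "nat \<Rightarrow> real \<Rightarrow> ereal \<Rightarrow> ereal \<Rightarrow> (real^'n::finite \<Rightarrow> real) \<Rightarrow> real" where
  "wav_norm b \<alpha> p q f =
    (if q = \<infinity> then (SUP j. wav_level_weighted b \<alpha> p f j)
     else (\<Sum>L. wav_term b \<alpha> p q f L) powr (1 / real_of_ereal q))"

definition haar_all :: "nat \<Rightarrow> (('n::finite \<Rightarrow> nat) \<times> ('n \<Rightarrow> nat) \<times> ('n \<Rightarrow> nat)) set" where
  "haar_all b = {(j, i, k). (i, k) \<in> haar_index b j}"

definition wav_series :: "nat \<Rightarrow> (real^'n::finite \<Rightarrow> real) \<Rightarrow> real^'n \<Rightarrow> real" where
  "wav_series b f x = infsum (\<lambda>(j, i, k). haar_coeff b f j i k * haar b j i k x) (haar_all b)"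

definition wav_space :: "nat \<Rightarrow> real \<Rightarrow> ereal \<Rightarrow> ereal \<Rightarrow> (real^'n::finite \<Rightarrow> real) set" where
  "wav_space b \<alpha> p q = {f. integrable (lebesgue_on unit_cube) f \<and>
     (if q = \<infinity> then
        bdd_above (range (wav_level_weighted b \<alpha> p f)) \<and>
        (\<forall>x\<in>unit_cube. (\<lambda>(j, i, k). haar_coeff b f j i k * haar b j i k x) summable_on haar_all b) \<and>
        (AE x in lebesgue_on unit_cube. wav_series b f x = f x)
      else summable (wav_term b \<alpha> p q f))}"

definition qmc :: "nat \<Rightarrow> nat \<Rightarrow> (real^'n::finite) set \<Rightarrow> (real^'n \<Rightarrow> real) \<Rightarrow> real" where
  "qmc b m P g = real b powr (- real m) * (\<Sum>x\<in>P. g x)"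

text \<open>Worst-case error on the unit ball; point values of f are those of S(f).\<close>
definition e_wor_wav :: "nat \<Rightarrow> real \<Rightarrow> ereal \<Rightarrow> ereal \<Rightarrow> nat \<Rightarrow> (real^'n::finite) set \<Rightarrow> ereal" where
  "e_wor_wav b \<alpha> p q m P =
    (SUP f \<in> {f \<in> wav_space b \<alpha> p q. wav_norm b \<alpha> p q f \<le> 1}.
       ereal \<bar>(LINT x|lebesgue_on unit_cube. f x) - qmc b m P (wav_series b f)\<bar>)"

definition elem_interval :: "nat \<Rightarrow> ('n::finite \<Rightarrow> nat) \<Rightarrow> ('n \<Rightarrow> nat) \<Rightarrow> (real^'n) set" where
  "elem_interval b d a =
     {x. \<forall>l. real (a l) / real b ^ d l \<le> x $ l \<and> x $ l < (real (a l) + 1) / real b ^ d l}"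

definition is_net :: "nat \<Rightarrow> nat \<Rightarrow> nat \<Rightarrow> (real^'n::finite) set \<Rightarrow> bool" where
  "is_net b t m P \<longleftrightarrow> t \<le> m \<and> finite P \<and> P \<subseteq> {x. \<forall>l. 0 \<le> x $ l \<and> x $ l < 1} \<and>
     (\<forall>d a. sum d UNIV = m - t \<and> (\<forall>l. a l < b ^ d l) \<longrightarrow>
        card (P \<inter> elem_interval b d a) = b ^ t)"

end

theory Submission
  imports Defs
begin

text \<open>
  Expand f in the Haar basis and apply Q_P termwise; the constant term gives the integral.
  A Haar function of level j is constant on the elementary boxes of resolution j. If
  1 <= |j| <= m - t, each of these boxes contains the same number of points of the net, so Q_P
  integrates the Haar function exactly, to 0. For |j| > m - t every box in its support still
  contains at most b^(t+s) points. Hoelder's inequality over the indices (i, k) of one level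
  bounds the contribution of level j by b^(t+2s) N^(-1/p) b^(-(alpha - 1/p) |j|) W_j, where W_j
  is the weighted l_p norm of the level-j coefficients. Hoelder's inequality over the levels
  |j| > m - t against the l_q norm of (W_j), with at most (L + 1)^(s-1) levels of order L,
  then gives N^(-alpha) (log N)^((s-1)/q').
\<close>

section \<open>Points of a net in elementary boxes\<close>

definition box_count :: "nat \<Rightarrow> (real^'n::finite) set \<Rightarrow> ('n \<Rightarrow> nat) \<Rightarrow> ('n \<Rightarrow> nat) \<Rightarrow> nat" where
  "box_count b P d a = card (P \<inter> elem_interval b d a)"

lemma floor_mult_eq_iff:
  assumes "c > 0"
  shows "\<lfloor>y * c\<rfloor> = int a \<longleftrightarrow> real a / c \<le> y \<and> y < (real a + 1) / c"
  using assms by (simp add: floor_eq_iff pos_divide_le_eq pos_less_divide_eq)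

lemma mem_elem_interval_iff_floor:
  assumes "b > 0"
  shows "x \<in> elem_interval b d a \<longleftrightarrow> (\<forall>l. \<lfloor>x$l * real b ^ d l\<rfloor> = int (a l))"
  using floor_mult_eq_iff[of "real b ^ d _"] assms unfolding elem_interval_def by auto

lemma floor_mult_power_Suc_div:
  assumes "b > 0"
  shows "\<lfloor>y * real b ^ Suc d\<rfloor> div int b = \<lfloor>y * real b ^ d\<rfloor>"
proof -
  have "y * real b ^ d = (y * real b ^ Suc d) / real_of_int (int b)" using assms by simp
  then show ?thesis using floor_divide_real_eq_div[of "int b" "y * real b ^ Suc d"] by simp
qed

lemma int_div_eq_iff_digit:
  assumes "b > 0"
  shows "n div int b = int a \<longleftrightarrow> (\<exists>r<b. n = int (b * a + r))"
proof
  assume "n div int b = int a"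
  then have "n = int (b * a) + n mod int b" by (metis mult_div_mod_eq of_nat_mult)
  moreover have "0 \<le> n mod int b" "n mod int b < int b" using assms by auto
  ultimately show "\<exists>r<b. n = int (b * a + r)"
    by (metis nonneg_int_cases of_nat_add of_nat_less_iff)
qed (use assms in auto)

lemma disjoint_elem_interval:
  assumes "b > 0" and "a \<noteq> a'"
  shows "elem_interval b d a \<inter> elem_interval b d a' = {}"
proof -
  obtain l where "a l \<noteq> a' l" using assms(2) by blast
  then show ?thesis by (force simp: mem_elem_interval_iff_floor[OF assms(1)])
qed

lemma elem_interval_split:
  assumes "b > 0"
  shows "elem_interval b d a = (\<Union>r<b. elem_interval b (d(l := Suc (d l))) (a(l := b * a l + r)))"
proof -
  have digit: "\<lfloor>y * real b ^ d l\<rfloor> = int (a l) \<longleftrightarrow> (\<exists>r<b. \<lfloor>y * real b ^ Suc (d l)\<rfloor> = int (b * a l + r))" for y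
    using int_div_eq_iff_digit[OF assms, of "\<lfloor>y * real b ^ Suc (d l)\<rfloor>" "a l"]
      floor_mult_power_Suc_div[OF assms, of y "d l"] by metis
  show ?thesis
  proof (intro set_eqI iffI)
    fix x assume "x \<in> elem_interval b d a"
    then have x: "\<forall>l'. \<lfloor>x$l' * real b ^ d l'\<rfloor> = int (a l')"
      by (simp add: mem_elem_interval_iff_floor[OF assms])
    then obtain r where "r < b" "\<lfloor>x$l * real b ^ Suc (d l)\<rfloor> = int (b * a l + r)"
      using digit by blast
    with x show "x \<in> (\<Union>r<b. elem_interval b (d(l := Suc (d l))) (a(l := b * a l + r)))"
      by (auto simp: mem_elem_interval_iff_floor[OF assms])
  next
    fix x assume "x \<in> (\<Union>r<b. elem_interval b (d(l := Suc (d l))) (a(l := b * a l + r)))"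
    then obtain r where r: "r < b" and x: "\<forall>l'. \<lfloor>x$l' * real b ^ (d(l := Suc (d l))) l'\<rfloor> = int ((a(l := b * a l + r)) l')"
      by (auto simp: mem_elem_interval_iff_floor[OF assms])
    have "\<lfloor>x$l' * real b ^ d l'\<rfloor> = int (a l')" for l'
    proof (cases "l' = l")
      case True
      then show ?thesis using digit r x[rule_format, of l] by auto
    next
      case False
      then show ?thesis using x[rule_format, of l'] by simp
    qed
    then show "x \<in> elem_interval b d a" by (simp add: mem_elem_interval_iff_floor[OF assms])
  qed
qed

lemma box_count_split:
  assumes "b > 0" and "finite P"
  shows "box_count b P d a = (\<Sum>r<b. box_count b P (d(l := Suc (d l))) (a(l := b * a l + r)))"
proof -
  let ?box = "\<lambda>r. P \<inter> elem_interval b (d(l := Suc (d l))) (a(l := b * a l + r))"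
  have split: "P \<inter> elem_interval b d a = (\<Union>r<b. ?box r)"
    using elem_interval_split[OF assms(1)] by blast
  have disj: "?box r1 \<inter> ?box r2 = {}" if "r1 \<noteq> r2" for r1 r2
  proof -
    have "a(l := b * a l + r1) \<noteq> a(l := b * a l + r2)" using that by (metis add_left_cancel fun_upd_same)
    then show ?thesis using disjoint_elem_interval[OF assms(1)] by blast
  qed
  have "card (\<Union>r<b. ?box r) = (\<Sum>r<b. card (?box r))"
    by (rule card_UN_disjoint) (use assms(2) disj in auto)
  then show ?thesis unfolding box_count_def split .
qed

lemma sum_fun_upd_Suc:
  fixes d :: "'n::finite \<Rightarrow> nat"
  shows "sum (d(l := Suc (d l))) UNIV = Suc (sum d UNIV)"
proof -
  have "sum (d(l := Suc (d l))) UNIV = Suc (d l) + sum d (UNIV - {l})"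
    by (subst sum.remove[of _ l]) (auto intro!: sum.cong)
  also have "\<dots> = Suc (sum d UNIV)" by (subst (2) sum.remove[of _ l]) auto
  finally show ?thesis .
qed

lemma digit_bound_Suc:
  fixes a b r :: nat
  assumes "a < b ^ d" and "r < b"
  shows "b * a + r < b ^ Suc d"
proof -
  have "b * (a + 1) \<le> b * b ^ d" using assms(1) by (intro mult_le_mono2) simp
  then show ?thesis using assms(2) by simp
qed

lemma net_box_count_eq:
  assumes net: "is_net b t m P" and b: "b \<ge> 2"
    and "sum d UNIV \<le> m - t" and "\<forall>l. a l < b ^ d l"
  shows "box_count b P (d::'n::finite \<Rightarrow> nat) a = b ^ (m - sum d UNIV)"
  using assms(3,4)
proof (induction "m - t - sum d UNIV" arbitrary: d a)
  case 0
  then have "sum d UNIV = m - t" by simp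
  moreover have "t \<le> m" using net by (simp add: is_net_def)
  ultimately show ?case using net 0(3) unfolding is_net_def box_count_def by simp
next
  case (Suc n)
  fix l :: 'n
  let ?d = "d(l := Suc (d l))" and ?a = "\<lambda>r. a(l := b * a l + r)"
  have sum_d: "sum ?d UNIV = Suc (sum d UNIV)" by (rule sum_fun_upd_Suc)
  have IH: "box_count b P ?d (?a r) = b ^ (m - sum ?d UNIV)" if "r < b" for r
  proof (rule Suc.hyps(1))
    show "n = m - t - sum ?d UNIV" "sum ?d UNIV \<le> m - t" using Suc.hyps(2) sum_d by simp_all
    show "\<forall>l'. ?a r l' < b ^ ?d l'" using Suc.prems(2) digit_bound_Suc[OF _ that, of "a l" "d l"] by auto
  qed
  have "m - sum d UNIV = Suc (m - sum ?d UNIV)" using Suc.hyps(2) sum_d by simp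
  have "box_count b P d a = (\<Sum>r<b. box_count b P ?d (?a r))"
    using box_count_split[of b P d a l] net b by (simp add: is_net_def)
  also have "\<dots> = b * b ^ (m - sum ?d UNIV)" using IH by simp
  also have "\<dots> = b ^ (m - sum d UNIV)" using \<open>m - sum d UNIV = Suc (m - sum ?d UNIV)\<close> by simp
  finally show ?case .
qed

lemma net_box_count_le_fine:
  assumes net: "is_net b t m P" and b: "b \<ge> 2"
    and "m - t \<le> sum d UNIV" and "\<forall>l. a l < b ^ d l"
  shows "box_count b P (d::'n::finite \<Rightarrow> nat) a \<le> b ^ t"
  using assms(3,4)
proof (induction "sum d UNIV - (m - t)" arbitrary: d a)
  case 0
  then have "sum d UNIV = m - t" by simp
  moreover have "t \<le> m" using net by (simp add: is_net_def)
  ultimately show ?case using net_box_count_eq[OF net b _ 0(3)] by simp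
next
  case (Suc n)
  obtain l where "d l > 0"
  proof (rule ccontr)
    assume "\<not> thesis"
    then have "d = (\<lambda>_. 0)" using that by (auto simp: fun_eq_iff)
    then show False using Suc.hyps(2) by simp
  qed
  define d' where "d' = d(l := d l - 1)"
  define a' where "a' = a(l := a l div b)"
  have d_eq: "d'(l := Suc (d' l)) = d" using \<open>d l > 0\<close> by (auto simp: d'_def)
  have a_eq: "a'(l := b * a' l + a l mod b) = a" by (simp add: a'_def fun_eq_iff)
  have sum_d': "Suc (sum d' UNIV) = sum d UNIV" using sum_fun_upd_Suc[of d' l] d_eq by simp
  have a': "\<forall>l'. a' l' < b ^ d' l'"
  proof
    fix l'
    have "a l < b ^ (d l - 1) * b" using Suc.prems(2) \<open>d l > 0\<close>
      by (metis Suc_diff_1 mult.commute power_Suc)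
    then show "a' l' < b ^ d' l'" using Suc.prems(2) by (simp add: a'_def d'_def less_mult_imp_div_less)
  qed
  have "box_count b P d a \<le> (\<Sum>r<b. box_count b P d (a'(l := b * a' l + r)))"
    using member_le_sum[of "a l mod b" "{..<b}" "\<lambda>r. box_count b P d (a'(l := b * a' l + r))"] a_eq b
    by simp
  also have "\<dots> = box_count b P d' a'"
    using box_count_split[of b P d' a' l] d_eq net b by (simp add: is_net_def)
  also have "\<dots> \<le> b ^ t"
  proof (rule Suc.hyps(1))
    show "n = sum d' UNIV - (m - t)" "m - t \<le> sum d' UNIV" using Suc.hyps(2) Suc.prems(1) sum_d' by simp_all
  qed (rule a')
  finally show ?case .
qed

text \<open>A finer box lies in a box of resolution m - t, which holds b^t points.\<close>

lemma net_box_count_le: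
  assumes net: "is_net b t m P" and b: "b \<ge> 2" and "\<forall>l. a l < b ^ d l"
  shows "box_count b P (d::'n::finite \<Rightarrow> nat) a \<le> b ^ max t (m - sum d UNIV)"
proof (cases "sum d UNIV \<le> m - t")
  case True
  then show ?thesis using net_box_count_eq[OF net b True assms(3)] b by (simp add: power_increasing)
next
  case False
  then show ?thesis using net_box_count_le_fine[OF net b _ assms(3)] by simp
qed

lemma card_net:
  fixes P :: "(real^'n::finite) set"
  assumes net: "is_net b t m P" and b: "b \<ge> 2"
  shows "card P = b ^ m"
proof -
  have "P \<inter> elem_interval b (\<lambda>_. 0) (\<lambda>_. 0) = P"
    using net unfolding is_net_def elem_interval_def by auto
  then show ?thesis using net_box_count_eq[OF net b, of "\<lambda>_. 0" "\<lambda>_. 0"]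
    unfolding box_count_def by simp
qed

lemma sum_box_count_le_card:
  assumes "b > 0" and "finite P" and "finite A"
  shows "(\<Sum>a\<in>A. box_count b P d a) \<le> card P"
proof -
  have "(\<Sum>a\<in>A. box_count b P d a) = card (\<Union>a\<in>A. P \<inter> elem_interval b d a)"
    unfolding box_count_def
    by (rule card_UN_disjoint[symmetric])
      (use assms(2,3) disjoint_elem_interval[OF assms(1), of _ _ d] in blast)+
  also have "\<dots> \<le> card P" by (rule card_mono) (use assms in auto)
  finally show ?thesis .
qed

section \<open>Haar functions as step functions\<close>

text \<open>The value of \<psi>^j_{i,k} on the n-th interval of length b^(-j).\<close>

definition haar1_cell :: "nat \<Rightarrow> nat \<Rightarrow> nat \<Rightarrow> nat \<Rightarrow> int \<Rightarrow> real" where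
  "haar1_cell b j i k n =
    (if j = 0 then (if n = 0 then 1 else 0)
     else real b powr (real j / 2 - 1) *
       (real b * (if n = int (b * k + i) then 1 else 0) - (if n div int b = int k then 1 else 0)))"

lemma haar1_eq_cell:
  assumes b: "b > 0"
  shows "haar1 b j i k y = haar1_cell b j i k \<lfloor>y * real b ^ j\<rfloor>"
proof (cases "j = 0")
  case True
  then show ?thesis unfolding haar1_def haar1_cell_def by (simp add: indicator_def floor_eq_iff)
next
  case False
  have pos: "real b ^ j > 0" "real b ^ (j - 1) > 0" using b by auto
  have fine: "(indicator {(real b * real k + real i) / real b ^ j ..< (real b * real k + real i + 1) / real b ^ j} y :: real)
      = (if \<lfloor>y * real b ^ j\<rfloor> = int (b * k + i) then 1 else 0)"
    using floor_mult_eq_iff[OF pos(1), of y "b * k + i"] by (simp add: indicator_def)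
  have "\<lfloor>y * real b ^ j\<rfloor> div int b = \<lfloor>y * real b ^ (j - 1)\<rfloor>"
    using floor_mult_power_Suc_div[OF b, of y "j - 1"] False by simp
  then have coarse: "(indicator {real k / real b ^ (j - 1) ..< (real k + 1) / real b ^ (j - 1)} y :: real)
      = (if \<lfloor>y * real b ^ j\<rfloor> div int b = int k then 1 else 0)"
    using floor_mult_eq_iff[OF pos(2), of y k] by (simp add: indicator_def)
  show ?thesis unfolding haar1_def haar1_cell_def using False fine coarse by simp
qed

lemma sum_haar1_cell_eq_0:
  assumes b: "b > 0" and j: "j \<ge> 1" and i: "i < b" and k: "k < b ^ (j - 1)"
  shows "(\<Sum>n\<in>{0..<int b ^ j}. haar1_cell b j i k n) = 0"
proof -
  have digit_bound: "b * k + r < b ^ j" if "r < b" for r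
    using digit_bound_Suc[OF k that] j by simp
  have fine: "(\<Sum>n\<in>{0..<int b ^ j}. if n = int (b * k + i) then 1 else 0 :: real) = 1"
  proof -
    have "int (b * k + i) < int b ^ j" using digit_bound[OF i] by (metis of_nat_less_iff of_nat_power)
    then show ?thesis by (simp add: sum.delta')
  qed
  have "{n \<in> {0..<int b ^ j}. n div int b = int k} = (\<lambda>r. int (b * k + r)) ` {..<b}"
    using int_div_eq_iff_digit[OF b] digit_bound by (auto simp del: of_nat_add of_nat_mult)
  then have "card {n \<in> {0..<int b ^ j}. n div int b = int k} = b"
    by (simp add: card_image inj_on_def)
  then have coarse: "(\<Sum>n\<in>{0..<int b ^ j}. if n div int b = int k then 1 else 0 :: real) = real b"
    using sum.inter_filter[of "{0..<int b ^ j}" "\<lambda>_. 1 :: real" "\<lambda>n. n div int b = int k"] by simp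
  show ?thesis
    using j fine coarse unfolding haar1_cell_def by (simp add: sum_subtractf sum_distrib_left[symmetric])
qed

lemma abs_haar1_le:
  assumes b: "b > 0" and i: "i \<in> nabla b j" and k: "k \<in> Delta b j"
  shows "\<bar>haar1 b j i k y\<bar> \<le> real b powr (real j / 2) * (if \<lfloor>y * real b ^ (j - 1)\<rfloor> = int k then 1 else 0)"
proof (cases "j = 0")
  case True
  then have "i = 0" "k = 0" using i k unfolding nabla_def Delta_def by auto
  then show ?thesis using True b unfolding haar1_def by (simp add: indicator_def floor_eq_iff)
next
  case False
  define n where "n = \<lfloor>y * real b ^ j\<rfloor>"
  have "i < b" using i False unfolding nabla_def by auto
  have coarse: "\<lfloor>y * real b ^ (j - 1)\<rfloor> = n div int b"
    using floor_mult_power_Suc_div[OF b, of y "j - 1"] False unfolding n_def by simp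
  have fine_sub: "n = int (b * k + i) \<Longrightarrow> n div int b = int k" using \<open>i < b\<close> by simp
  have "real b powr (real j / 2) = real b powr (real j / 2 - 1) * real b"
    using b by (simp add: powr_diff)
  moreover have "real b powr (real j / 2 - 1) \<le> real b powr (real j / 2)"
    using b by (intro powr_mono) auto
  ultimately show ?thesis
    using haar1_eq_cell[OF b, of j i k y] False fine_sub coarse b
    unfolding haar1_cell_def n_def[symmetric] by (auto simp: abs_mult)
qed

lemma abs_haar_le:
  fixes j :: "'n::finite \<Rightarrow> nat"
  assumes b: "b > 0" and ik: "(i, k) \<in> haar_index b j"
  shows "\<bar>haar b j i k x\<bar> \<le> real b powr (real (sum j UNIV) / 2) * indicator (elem_interval b (\<lambda>l. j l - 1) k) x"
proof -
  have "\<bar>haar b j i k x\<bar> = (\<Prod>l\<in>UNIV. \<bar>haar1 b (j l) (i l) (k l) (x $ l)\<bar>)"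
    unfolding haar_def by (simp add: abs_prod)
  also have "\<dots> \<le> (\<Prod>l\<in>UNIV. real b powr (real (j l) / 2) *
      (if \<lfloor>x$l * real b ^ (j l - 1)\<rfloor> = int (k l) then 1 else 0))"
    using ik unfolding haar_index_def by (intro prod_mono conjI abs_ge_zero abs_haar1_le[OF b]) auto
  also have "\<dots> = real b powr (real (sum j UNIV) / 2) * indicator (elem_interval b (\<lambda>l. j l - 1) k) x"
    using b by (simp add: prod.distrib powr_sum sum_divide_distrib prod_zero_iff
        indicator_def mem_elem_interval_iff_floor)
  finally show ?thesis .
qed

lemma abs_sum_haar_le_box_count:
  fixes j :: "'n::finite \<Rightarrow> nat"
  assumes b: "b > 0" and ik: "(i, k) \<in> haar_index b j" and P: "finite P"
  shows "\<bar>\<Sum>x\<in>P. haar b j i k x\<bar> \<le> real b powr (real (sum j UNIV) / 2) * real (box_count b P (\<lambda>l. j l - 1) k)"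
proof -
  have "\<bar>\<Sum>x\<in>P. haar b j i k x\<bar> \<le> (\<Sum>x\<in>P. real b powr (real (sum j UNIV) / 2) *
      indicator (elem_interval b (\<lambda>l. j l - 1) k) x)"
    by (rule order_trans[OF sum_abs sum_mono]) (rule abs_haar_le[OF b ik])
  also have "\<dots> = real b powr (real (sum j UNIV) / 2) * real (box_count b P (\<lambda>l. j l - 1) k)"
    using P by (simp add: sum_distrib_left[symmetric] box_count_def indicator_def sum.If_cases Int_def)
  finally show ?thesis .
qed

section \<open>Nets integrate Haar functions of coarse level exactly\<close>

lemma sum_net_cell_product:
  fixes P :: "(real^'n::finite) set" and g :: "'n \<Rightarrow> int \<Rightarrow> real"
  assumes net: "is_net b t m P" and b: "b \<ge> 2" and d: "sum d UNIV \<le> m - t"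
  shows "(\<Sum>x\<in>P. \<Prod>l\<in>UNIV. g l \<lfloor>x$l * real b ^ d l\<rfloor>) =
           real (b ^ (m - sum d UNIV)) * (\<Prod>l\<in>UNIV. \<Sum>n\<in>{0..<int b ^ d l}. g l n)"
proof -
  define cell where "cell x = (\<lambda>l. \<lfloor>x$l * real b ^ d l\<rfloor>)" for x :: "real^'n"
  define A where "A = PiE UNIV (\<lambda>l. {0..<int b ^ d l})"
  have P: "finite P" "\<And>x l. x \<in> P \<Longrightarrow> 0 \<le> x$l \<and> x$l < 1"
    using net unfolding is_net_def by auto
  have A: "finite A" unfolding A_def by (intro finite_PiE) auto
  have cell_A: "cell ` P \<subseteq> A"
  proof clarify
    fix x assume "x \<in> P"
    have "0 \<le> cell x l \<and> cell x l < int b ^ d l" for l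
    proof -
      have "0 \<le> x$l * real b ^ d l" "x$l * real b ^ d l < real b ^ d l"
        using P(2)[OF \<open>x \<in> P\<close>, of l] b by auto
      then show ?thesis unfolding cell_def by (simp add: floor_less_iff)
    qed
    then show "cell x \<in> A" unfolding A_def by (auto simp: PiE_UNIV_domain)
  qed
  have count: "card {x \<in> P. cell x = a} = b ^ (m - sum d UNIV)" if "a \<in> A" for a
  proof -
    define a' where "a' l = nat (a l)" for l
    have a: "a l = int (a' l)" "a' l < b ^ d l" for l
    proof -
      have "0 \<le> a l" "a l < int (b ^ d l)" using that unfolding A_def by (auto simp: PiE_UNIV_domain)
      then show "a l = int (a' l)" "a' l < b ^ d l" unfolding a'_def by (simp_all add: nat_less_iff)
    qed
    have "{x \<in> P. cell x = a} = P \<inter> elem_interval b d a'"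
      using b unfolding cell_def by (auto simp: mem_elem_interval_iff_floor fun_eq_iff a(1))
    then show ?thesis using net_box_count_eq[OF net b d] a(2) unfolding box_count_def by simp
  qed
  have "(\<Sum>x\<in>P. \<Prod>l\<in>UNIV. g l (cell x l)) = (\<Sum>a\<in>A. \<Sum>x\<in>{x \<in> P. cell x = a}. \<Prod>l\<in>UNIV. g l (cell x l))"
    by (rule sum.group[OF P(1) A cell_A, symmetric])
  also have "\<dots> = (\<Sum>a\<in>A. real (b ^ (m - sum d UNIV)) * (\<Prod>l\<in>UNIV. g l (a l)))"
    by (intro sum.cong refl) (simp add: count)
  also have "\<dots> = real (b ^ (m - sum d UNIV)) * (\<Prod>l\<in>UNIV. \<Sum>n\<in>{0..<int b ^ d l}. g l n)"
    unfolding A_def by (simp add: prod_sum_PiE sum_distrib_left)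
  finally show ?thesis unfolding cell_def .
qed

lemma sum_haar_net_eq_0:
  fixes P :: "(real^'n::finite) set"
  assumes net: "is_net b t m P" and b: "b \<ge> 2" and ik: "(i, k) \<in> haar_index b j"
    and j: "1 \<le> sum j UNIV" "sum j UNIV \<le> m - t"
  shows "(\<Sum>x\<in>P. haar b j i k x) = 0"
proof -
  obtain l0 where l0: "j l0 \<ge> 1"
  proof (rule ccontr)
    assume "\<not> thesis"
    then have "j l = 0" for l using that[of l] by linarith
    then show False using j(1) by simp
  qed
  have "i l0 < b" "k l0 < b ^ (j l0 - 1)"
    using ik l0 unfolding haar_index_def nabla_def Delta_def by (auto split: if_splits)
  then have "(\<Sum>n\<in>{0..<int b ^ j l0}. haar1_cell b (j l0) (i l0) (k l0) n) = 0"
    using sum_haar1_cell_eq_0[OF _ l0] b by simp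
  then have factor_0: "(\<Prod>l\<in>UNIV. \<Sum>n\<in>{0..<int b ^ j l}. haar1_cell b (j l) (i l) (k l) n) = 0"
    by (intro prod_zero) auto
  have "(\<Sum>x\<in>P. haar b j i k x) = (\<Sum>x\<in>P. \<Prod>l\<in>UNIV. haar1_cell b (j l) (i l) (k l) \<lfloor>x$l * real b ^ j l\<rfloor>)"
    unfolding haar_def using haar1_eq_cell b by simp
  also have "\<dots> = 0"
    using sum_net_cell_product[OF net b j(2), of "\<lambda>l. haar1_cell b (j l) (i l) (k l)"] factor_0 by simp
  finally show ?thesis .
qed

lemma unit_cube_lebesgue: "unit_cube \<in> sets (lebesgue :: (real^'n::finite) measure)"
proof -
  have "{x :: real^'n. \<forall>l. 0 \<le> x$l \<and> x$l \<le> 1} \<in> sets borel" by measurable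
  then show ?thesis unfolding unit_cube_def by simp
qed

lemma haar_borel_measurable: "haar b j i k \<in> borel_measurable (borel :: (real^'n::finite) measure)"
  unfolding haar_def haar1_def by measurable

text \<open>\<Psi>^0_{0,0} is the indicator of the half-open cube, which differs from
  the closed unit cube only on the faces x_l = 1, a null set.\<close>

lemma haar_coeff_0_eq_integral:
  fixes f :: "real^'n::finite \<Rightarrow> real"
  assumes f: "integrable (lebesgue_on unit_cube) f"
  shows "haar_coeff b f (\<lambda>_. 0) (\<lambda>_. 0) (\<lambda>_. 0) = (LINT x|lebesgue_on unit_cube. f x)"
proof -
  define N where "N = (\<Union>l. {x :: real^'n. x$l = 1})"
  have "negligible {x :: real^'n. x$l = 1}" for l
  proof -
    have "{x :: real^'n. x$l = 1} = {x. x \<bullet> axis l 1 = 1}" by (simp add: cart_eq_inner_axis)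
    then show ?thesis using negligible_standard_hyperplane[of "axis l (1::real)" 1] by (simp add: Basis_real_def)
  qed
  then have "negligible N" unfolding N_def by (intro negligible_Union) auto
  then have "N \<inter> unit_cube \<in> null_sets lebesgue"
    using negligible_subset[of N "N \<inter> unit_cube"] negligible_iff_null_sets by blast
  then have null: "N \<inter> unit_cube \<in> null_sets (lebesgue_on unit_cube)"
    using null_sets_restrict_space[OF unit_cube_lebesgue] by blast
  have haar_0: "haar b (\<lambda>_. 0) (\<lambda>_. 0) (\<lambda>_. 0) x = 1" if "x \<in> unit_cube" "x \<notin> N" for x
  proof -
    have "x$l \<in> {0..<1}" for l using that unfolding unit_cube_def N_def by (auto simp: less_le)
    then show ?thesis unfolding haar_def haar1_def by simp
  qed
  have "AE x in lebesgue_on unit_cube. f x * haar b (\<lambda>_. 0) (\<lambda>_. 0) (\<lambda>_. 0) x = f x"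
    by (rule AE_I'[OF null]) (use haar_0 in auto)
  moreover have "f \<in> borel_measurable (lebesgue_on unit_cube)" using f by auto
  moreover have "haar b (\<lambda>_. 0) (\<lambda>_. 0) (\<lambda>_. 0) \<in> borel_measurable (lebesgue_on unit_cube)"
    by (intro measurable_restrict_space1 measurable_completion) (simp add: haar_borel_measurable)
  ultimately show ?thesis unfolding haar_coeff_def
    by (intro integral_cong_AE) measurable
qed

section \<open>Hoelder's inequality for finite sums\<close>

lemma Holder_inequality_sum:
  fixes x y :: "'a \<Rightarrow> real"
  assumes fin: "finite I" and p: "p > 1" and q: "q > 1" and pq: "1/p + 1/q = 1"
    and x: "\<And>i. i \<in> I \<Longrightarrow> x i \<ge> 0" and y: "\<And>i. i \<in> I \<Longrightarrow> y i \<ge> 0"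
  shows "(\<Sum>i\<in>I. x i * y i) \<le> (\<Sum>i\<in>I. x i powr p) powr (1/p) * (\<Sum>i\<in>I. y i powr q) powr (1/q)"
proof -
  define A where "A = (\<Sum>i\<in>I. x i powr p)"
  define B where "B = (\<Sum>i\<in>I. y i powr q)"
  have "A \<ge> 0" "B \<ge> 0" unfolding A_def B_def by (auto intro: sum_nonneg)
  show ?thesis
  proof (cases "A = 0 \<or> B = 0")
    case True
    then have "(\<forall>i\<in>I. x i = 0) \<or> (\<forall>i\<in>I. y i = 0)"
      unfolding A_def B_def using fin by (auto simp: sum_nonneg_eq_0_iff)
    then show ?thesis by auto
  next
    case False
    then have A: "A > 0" and B: "B > 0" using \<open>A \<ge> 0\<close> \<open>B \<ge> 0\<close> by auto
    define \<alpha> where "\<alpha> = A powr (1/p)"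
    define \<beta> where "\<beta> = B powr (1/q)"
    have \<alpha>\<beta>: "\<alpha> > 0" "\<beta> > 0" "\<alpha> powr p = A" "\<beta> powr q = B"
      unfolding \<alpha>_def \<beta>_def using A B p q by (auto simp: powr_powr)
    have Young: "x i / \<alpha> * (y i / \<beta>) \<le> x i powr p / (p * A) + y i powr q / (q * B)" if "i \<in> I" for i
    proof -
      have "x i / \<alpha> * (y i / \<beta>) \<le> (x i / \<alpha>) powr p / p + (y i / \<beta>) powr q / q"
        using x[OF that] y[OF that] \<alpha>\<beta> by (intro Youngs_inequality p q pq) auto
      also have "\<dots> = x i powr p / (p * A) + y i powr q / (q * B)"
        using \<alpha>\<beta> by (simp add: powr_divide x[OF that] y[OF that] mult.commute)
      finally show ?thesis .
    qed
    have "(\<Sum>i\<in>I. x i * y i) / (\<alpha> * \<beta>) = (\<Sum>i\<in>I. x i / \<alpha> * (y i / \<beta>))"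
      by (simp add: sum_divide_distrib)
    also have "\<dots> \<le> (\<Sum>i\<in>I. x i powr p / (p * A) + y i powr q / (q * B))"
      using Young by (rule sum_mono)
    also have "\<dots> = 1"
      using A B p q pq unfolding A_def B_def by (simp add: sum.distrib sum_divide_distrib[symmetric])
    finally show ?thesis using \<alpha>\<beta> unfolding \<alpha>_def \<beta>_def A_def B_def by (simp add: divide_le_eq)
  qed
qed

lemma Holder_inequality_bounded_weights:
  fixes a w :: "'a \<Rightarrow> real"
  assumes fin: "finite I" and p: "p \<ge> 1" and a: "\<And>i. i \<in> I \<Longrightarrow> a i \<ge> 0"
    and w: "\<And>i. i \<in> I \<Longrightarrow> 0 \<le> w i \<and> w i \<le> M" and W: "(\<Sum>i\<in>I. w i) \<le> W"
    and M: "M > 0" and "W > 0"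
  shows "(\<Sum>i\<in>I. a i * w i) \<le> (\<Sum>i\<in>I. a i powr p) powr (1/p) * M powr (1/p) * W powr (1 - 1/p)"
proof (cases "p = 1")
  case True
  have "(\<Sum>i\<in>I. a i * w i) \<le> (\<Sum>i\<in>I. a i * M)" by (intro sum_mono mult_left_mono) (use a w in auto)
  also have "\<dots> = (\<Sum>i\<in>I. a i powr p) * M" using True a by (simp add: sum_distrib_right)
  finally show ?thesis using True M \<open>W > 0\<close> a by (simp add: sum_nonneg)
next
  case False
  then have p1: "p > 1" using p by simp
  define q where "q = p / (p - 1)"
  have q1: "q > 1" and pq: "1/p + 1/q = 1" unfolding q_def using p1 by (auto simp: field_simps)
  have "(\<Sum>i\<in>I. a i * w i) = (\<Sum>i\<in>I. (a i * w i powr (1/p)) * w i powr (1/q))"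
  proof (intro sum.cong refl)
    fix i assume "i \<in> I"
    have "w i powr (1/p) * w i powr (1/q) = w i" using pq w[OF \<open>i \<in> I\<close>] by (simp add: powr_add[symmetric])
    then show "a i * w i = (a i * w i powr (1/p)) * w i powr (1/q)" by (simp add: mult.assoc)
  qed
  also have "\<dots> \<le> (\<Sum>i\<in>I. (a i * w i powr (1/p)) powr p) powr (1/p) * (\<Sum>i\<in>I. (w i powr (1/q)) powr q) powr (1/q)"
    by (rule Holder_inequality_sum[OF fin p1 q1 pq]) (use a w in auto)
  also have "\<dots> \<le> ((\<Sum>i\<in>I. a i powr p) * M) powr (1/p) * W powr (1/q)"
  proof (rule mult_mono)
    have "(\<Sum>i\<in>I. (a i * w i powr (1/p)) powr p) = (\<Sum>i\<in>I. a i powr p * w i)"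
      using p1 w a by (intro sum.cong refl) (auto simp: powr_powr powr_mult)
    also have "\<dots> \<le> (\<Sum>i\<in>I. a i powr p) * M"
      unfolding sum_distrib_right by (intro sum_mono mult_left_mono) (use w in auto)
    finally show "(\<Sum>i\<in>I. (a i * w i powr (1/p)) powr p) powr (1/p) \<le> ((\<Sum>i\<in>I. a i powr p) * M) powr (1/p)"
      using p1 by (intro powr_mono2) (auto intro: sum_nonneg)
    have "(\<Sum>i\<in>I. (w i powr (1/q)) powr q) = (\<Sum>i\<in>I. w i)"
      using q1 w by (intro sum.cong refl) (auto simp: powr_powr)
    then show "(\<Sum>i\<in>I. (w i powr (1/q)) powr q) powr (1/q) \<le> W powr (1/q)"
      using W q1 w by (auto intro!: powr_mono2 sum_nonneg)
  qed auto
  also have "1/q = 1 - 1/p" using pq by simp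
  finally show ?thesis by (simp add: powr_mult)
qed

lemma einv_bounds: "p \<ge> 1 \<Longrightarrow> 0 \<le> einv p \<and> einv p \<le> 1"
  unfolding einv_def by (cases p) auto

lemma real_of_ereal_ge_1: "p \<ge> 1 \<Longrightarrow> p \<noteq> \<infinity> \<Longrightarrow> real_of_ereal p \<ge> 1"
  by (cases p) auto

lemma haar_index_eq_PiE:
  "haar_index b j = PiE UNIV (\<lambda>l. nabla b (j l)) \<times> PiE UNIV (\<lambda>l. Delta b (j l))"
  unfolding haar_index_def by (auto simp: PiE_UNIV_domain)

lemma finite_haar_index: "finite (haar_index b j)"
  unfolding haar_index_eq_PiE by (intro finite_cartesian_product finite_PiE) (auto simp: nabla_def Delta_def)

lemma zero_in_haar_index: "b > 0 \<Longrightarrow> ((\<lambda>_. 0), (\<lambda>_. 0)) \<in> haar_index b j"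
  unfolding haar_index_def nabla_def Delta_def by auto

lemma abs_haar_coeff_le_Max:
  assumes "(i, k) \<in> haar_index b j"
  shows "\<bar>haar_coeff b f j i k\<bar> \<le> Max ((\<lambda>(i, k). \<bar>haar_coeff b f j i k\<bar>) ` haar_index b j)"
  using Max_ge[OF finite_imageI[OF finite_haar_index] imageI[OF assms, of "\<lambda>(i, k). \<bar>haar_coeff b f j i k\<bar>"]]
  by simp

lemma level_norm_nonneg:
  assumes "b > 0"
  shows "level_norm b p f j \<ge> 0"
  using abs_haar_coeff_le_Max[OF zero_in_haar_index[OF assms]]
  unfolding level_norm_def by (auto intro: order_trans[OF abs_ge_zero])

lemma sum_abs_haar_coeff_weighted_le:
  fixes j :: "'n::finite \<Rightarrow> nat"
  assumes b: "b > 0" and p: "p \<ge> 1"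
    and w: "\<And>i k. (i, k) \<in> haar_index b j \<Longrightarrow> 0 \<le> w i k \<and> w i k \<le> M"
    and W: "(\<Sum>(i, k)\<in>haar_index b j. w i k) \<le> W" and "M > 0" and "W > 0"
  shows "(\<Sum>(i, k)\<in>haar_index b j. \<bar>haar_coeff b f j i k\<bar> * w i k)
           \<le> level_norm b p f j * M powr einv p * W powr (1 - einv p)"
proof (cases "p = \<infinity>")
  case True
  let ?Max = "Max ((\<lambda>(i, k). \<bar>haar_coeff b f j i k\<bar>) ` haar_index b j)"
  have "(\<Sum>(i, k)\<in>haar_index b j. \<bar>haar_coeff b f j i k\<bar> * w i k) \<le> (\<Sum>(i, k)\<in>haar_index b j. ?Max * w i k)"
    using w abs_haar_coeff_le_Max by (intro sum_mono) (auto intro!: mult_right_mono)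
  also have "\<dots> = ?Max * (\<Sum>(i, k)\<in>haar_index b j. w i k)"
    by (simp add: sum_distrib_left case_prod_beta')
  also have "\<dots> \<le> ?Max * W"
    using W level_norm_nonneg[OF b, of p f j] True by (intro mult_left_mono) (auto simp: level_norm_def)
  finally show ?thesis using True \<open>M > 0\<close> \<open>W > 0\<close> unfolding level_norm_def einv_def by simp
next
  case False
  define r where "r = real_of_ereal p"
  have "r \<ge> 1" using p False real_of_ereal_ge_1 unfolding r_def by blast
  have "(\<Sum>ik\<in>haar_index b j. (\<lambda>(i, k). \<bar>haar_coeff b f j i k\<bar>) ik * (\<lambda>(i, k). w i k) ik)
     \<le> (\<Sum>ik\<in>haar_index b j. (\<lambda>(i, k). \<bar>haar_coeff b f j i k\<bar>) ik powr r) powr (1/r) * M powr (1/r) * W powr (1 - 1/r)"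
    using w W \<open>M > 0\<close> \<open>W > 0\<close>
    by (intro Holder_inequality_bounded_weights[OF finite_haar_index \<open>r \<ge> 1\<close>]) (auto simp: case_prod_beta')
  then show ?thesis using False unfolding level_norm_def einv_def r_def by (simp add: case_prod_beta')
qed

lemma sum_box_count_haar_index_le:
  fixes j :: "'n::finite \<Rightarrow> nat"
  assumes b: "b > 0" and P: "finite P"
  shows "(\<Sum>(i, k)\<in>haar_index b j. real (box_count b P d k)) \<le> real (b ^ CARD('n)) * real (card P)"
proof -
  have "card (PiE UNIV (\<lambda>l. nabla b (j l))) \<le> b ^ CARD('n)"
    using b by (auto simp: card_PiE nabla_def intro!: prod_le_power)
  moreover have "(\<Sum>k\<in>PiE UNIV (\<lambda>l. Delta b (j l)). box_count b P d k) \<le> card P"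
    by (intro sum_box_count_le_card b P finite_PiE) (auto simp: Delta_def)
  ultimately show ?thesis
    unfolding haar_index_eq_PiE sum.cartesian_product[symmetric]
    by (simp add: mult_mono of_nat_sum[symmetric] del: of_nat_sum)
qed

lemma sum_level_error_le:
  fixes j :: "'n::finite \<Rightarrow> nat" and P :: "(real^'n) set"
  assumes b: "b > 0" and p: "p \<ge> 1" and P: "finite P" "P \<noteq> {}" and "M > 0"
    and M: "\<And>i k. (i, k) \<in> haar_index b j \<Longrightarrow> real (box_count b P (\<lambda>l. j l - 1) k) \<le> M"
  shows "(\<Sum>(i, k)\<in>haar_index b j. \<bar>haar_coeff b f j i k\<bar> * \<bar>\<Sum>x\<in>P. haar b j i k x\<bar>)
    \<le> real b powr (real (sum j UNIV) / 2) * (level_norm b p f j *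
        M powr einv p * (real (b ^ CARD('n)) * real (card P)) powr (1 - einv p))"
proof -
  have "(\<Sum>(i, k)\<in>haar_index b j. \<bar>haar_coeff b f j i k\<bar> * \<bar>\<Sum>x\<in>P. haar b j i k x\<bar>)
      \<le> (\<Sum>(i, k)\<in>haar_index b j. \<bar>haar_coeff b f j i k\<bar> *
          (real b powr (real (sum j UNIV) / 2) * real (box_count b P (\<lambda>l. j l - 1) k)))"
  proof (rule sum_mono, unfold split_paired_all case_prod_conv)
    fix i k assume "(i, k) \<in> haar_index b j"
    then show "\<bar>haar_coeff b f j i k\<bar> * \<bar>\<Sum>x\<in>P. haar b j i k x\<bar> \<le> \<bar>haar_coeff b f j i k\<bar> *
        (real b powr (real (sum j UNIV) / 2) * real (box_count b P (\<lambda>l. j l - 1) k))"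
      by (intro mult_left_mono abs_sum_haar_le_box_count[OF b _ P(1)]) auto
  qed
  also have "\<dots> = real b powr (real (sum j UNIV) / 2) *
      (\<Sum>(i, k)\<in>haar_index b j. \<bar>haar_coeff b f j i k\<bar> * real (box_count b P (\<lambda>l. j l - 1) k))"
    by (simp add: sum_distrib_left case_prod_beta' mult_ac)
  also have "\<dots> \<le> real b powr (real (sum j UNIV) / 2) * (level_norm b p f j *
      M powr einv p * (real (b ^ CARD('n)) * real (card P)) powr (1 - einv p))"
    using M \<open>M > 0\<close> P b sum_box_count_haar_index_le[OF b P(1)]
    by (intro mult_left_mono sum_abs_haar_coeff_weighted_le[OF b p]) (auto simp: card_gt_0_iff)
  finally show ?thesis .
qed

lemma powr_le_self:
  fixes x e :: real
  assumes "1 \<le> x" and "e \<le> 1"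
  shows "x powr e \<le> x"
  using powr_mono[OF assms(2,1)] assms(1) by simp

lemma level_norm_rescale:
  assumes "b > 0"
  shows "real b powr (real (sum j UNIV) / 2) * level_norm b p f j
       = real b powr (-(\<alpha> - einv p) * real (sum j UNIV)) * wav_level_weighted b \<alpha> p f j"
proof -
  have "real b powr (-(\<alpha> - einv p) * real (sum j UNIV)) * real b powr ((\<alpha> - einv p + 1/2) * real (sum j UNIV))
      = real b powr (real (sum j UNIV) / 2)"
    by (simp add: powr_add[symmetric] algebra_simps)
  then show ?thesis unfolding wav_level_weighted_def by (simp add: mult.assoc[symmetric])
qed

lemma sum_minus_one_ge:
  fixes j :: "'n::finite \<Rightarrow> nat"
  shows "sum j UNIV \<le> sum (\<lambda>l. j l - 1) UNIV + CARD('n)"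
proof -
  have "sum j UNIV \<le> (\<Sum>l\<in>UNIV. (j l - 1) + 1)" by (intro sum_mono) simp
  then show ?thesis by (simp add: sum_Suc)
qed

lemma net_box_count_haar_support_le:
  fixes P :: "(real^'n::finite) set"
  assumes net: "is_net b t m P" and b: "b \<ge> 2"
    and ik: "(i, k) \<in> haar_index b j" and j: "m - t < sum j UNIV"
  shows "box_count b P (\<lambda>l. j l - 1) k \<le> b ^ (t + CARD('n))"
proof -
  have "\<forall>l. k l < b ^ (j l - 1)" using ik unfolding haar_index_def Delta_def by (auto split: if_splits)
  then have "box_count b P (\<lambda>l. j l - 1) k \<le> b ^ max t (m - sum (\<lambda>l. j l - 1) UNIV)"
    by (rule net_box_count_le[OF net b])
  also have "\<dots> \<le> b ^ (t + CARD('n))"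
    using sum_minus_one_ge[of j] j b by (intro power_increasing) auto
  finally show ?thesis .
qed

lemma net_level_error_le:
  fixes P :: "(real^'n::finite) set"
  assumes net: "is_net b t m P" and b: "b \<ge> 2" and p: "p \<ge> 1" and j: "m - t < sum j UNIV"
  shows "(\<Sum>(i, k)\<in>haar_index b j. \<bar>haar_coeff b f j i k\<bar> * \<bar>\<Sum>x\<in>P. haar b j i k x\<bar>)
     \<le> real b ^ (t + 2 * CARD('n)) * real b powr (real m * (1 - einv p)) *
       (real b powr (-(\<alpha> - einv p) * real (sum j UNIV)) * wav_level_weighted b \<alpha> p f j)"
proof -
  let ?s = "CARD('n)" and ?B = "real b powr (real (sum j UNIV) / 2)"
  have P: "finite P" "P \<noteq> {}" "card P = b ^ m"
    using card_net[OF net b] net b unfolding is_net_def by auto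
  have einv: "0 \<le> einv p" "einv p \<le> 1" using einv_bounds[OF p] by auto
  have "(\<Sum>(i, k)\<in>haar_index b j. \<bar>haar_coeff b f j i k\<bar> * \<bar>\<Sum>x\<in>P. haar b j i k x\<bar>)
      \<le> ?B * (level_norm b p f j * (real b ^ (t + ?s)) powr einv p * (real (b ^ ?s) * real (card P)) powr (1 - einv p))"
    using b P net_box_count_haar_support_le[OF net b _ j]
    by (intro sum_level_error_le[OF _ p]) (auto simp flip: of_nat_power)
  also have "\<dots> \<le> ?B * (level_norm b p f j * (real b ^ (t + 2 * ?s) * real b powr (real m * (1 - einv p))))"
  proof -
    have "(real b ^ (t + ?s)) powr einv p \<le> real b ^ (t + ?s)"
      using b einv by (intro powr_le_self) (auto simp: one_le_power)
    moreover have "(real (b ^ ?s) * real (card P)) powr (1 - einv p)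
        = (real b ^ ?s) powr (1 - einv p) * real b powr (real m * (1 - einv p))"
      using P(3) b by (simp add: powr_mult powr_realpow[symmetric] powr_powr)
    moreover have "(real b ^ ?s) powr (1 - einv p) \<le> real b ^ ?s"
      using b einv by (intro powr_le_self) (auto simp: one_le_power)
    ultimately have "(real b ^ (t + ?s)) powr einv p * (real (b ^ ?s) * real (card P)) powr (1 - einv p)
        \<le> real b ^ (t + ?s) * (real b ^ ?s * real b powr (real m * (1 - einv p)))"
      by (auto intro!: mult_mono)
    then show ?thesis
      using level_norm_nonneg[of b p f j] b
      by (intro mult_left_mono) (auto simp: power_add mult_2 mult.assoc intro: mult_left_mono)
  qed
  also have "\<dots> = real b ^ (t + 2 * ?s) * real b powr (real m * (1 - einv p)) * (?B * level_norm b p f j)"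
    by (simp only: mult_ac)
  finally show ?thesis using level_norm_rescale[of b j p f \<alpha>] b by simp
qed

lemma point_level_error_le:
  fixes x :: "real^'n::finite"
  assumes b: "b > 0" and p: "p \<ge> 1"
  shows "(\<Sum>(i, k)\<in>haar_index b j. \<bar>haar_coeff b f j i k\<bar> * \<bar>haar b j i k x\<bar>)
     \<le> real b ^ CARD('n) * (real b powr (-(\<alpha> - einv p) * real (sum j UNIV)) * wav_level_weighted b \<alpha> p f j)"
proof -
  let ?B = "real b powr (real (sum j UNIV) / 2)"
  have "box_count b {x} d k \<le> 1" for d k unfolding box_count_def by (auto simp: card_le_Suc0_iff_eq)
  then have "(\<Sum>(i, k)\<in>haar_index b j. \<bar>haar_coeff b f j i k\<bar> * \<bar>\<Sum>y\<in>{x}. haar b j i k y\<bar>)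
      \<le> ?B * (level_norm b p f j * 1 powr einv p * (real (b ^ CARD('n)) * real (card {x})) powr (1 - einv p))"
    by (intro sum_level_error_le[OF b p]) auto
  also have "\<dots> \<le> ?B * (level_norm b p f j * real b ^ CARD('n))"
    using b einv_bounds[OF p] level_norm_nonneg[OF b, of p f j]
    by (auto intro!: mult_left_mono powr_le_self simp: one_le_power)
  also have "\<dots> = real b ^ CARD('n) * (?B * level_norm b p f j)" by (simp only: mult_ac)
  finally show ?thesis using level_norm_rescale[OF b, of j p f \<alpha>] by simp
qed

section \<open>Summing over levels\<close>

lemma levels_subset_PiE: "{j :: 'n::finite \<Rightarrow> nat. sum j UNIV = L} \<subseteq> PiE UNIV (\<lambda>_. {0..L})"
proof
  fix j :: "'n \<Rightarrow> nat" assume "j \<in> {j. sum j UNIV = L}"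
  then have "j l \<le> L" for l using member_le_sum[of l UNIV j] by simp
  then show "j \<in> PiE UNIV (\<lambda>_. {0..L})" by (simp add: PiE_UNIV_domain)
qed

lemma finite_levels: "finite {j :: 'n::finite \<Rightarrow> nat. sum j UNIV = L}"
  by (rule finite_subset[OF levels_subset_PiE]) (simp add: finite_PiE)

text \<open>A multi-index of given order is determined by all but one of its entries.\<close>

lemma card_levels_le: "card {j :: 'n::finite \<Rightarrow> nat. sum j UNIV = L} \<le> (L + 1) ^ (CARD('n) - 1)"
proof -
  fix l0 :: 'n
  let ?J = "{j :: 'n \<Rightarrow> nat. sum j UNIV = L}"
  have inj: "inj_on (\<lambda>j. restrict j (- {l0})) ?J"
  proof (rule inj_onI)
    fix j1 j2 assume j: "j1 \<in> ?J" "j2 \<in> ?J" and eq: "restrict j1 (- {l0}) = restrict j2 (- {l0})"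
    have other: "j1 l = j2 l" if "l \<noteq> l0" for l
      using fun_cong[OF eq, of l] that unfolding restrict_def by simp
    then have "sum j1 (- {l0}) = sum j2 (- {l0})" by (intro sum.cong) auto
    then have "j1 l0 = j2 l0" using j sum.remove[of UNIV l0 j1] sum.remove[of UNIV l0 j2]
      by (simp add: Compl_eq_Diff_UNIV)
    then show "j1 = j2" using other by (metis ext)
  qed
  have "(\<lambda>j. restrict j (- {l0})) ` ?J \<subseteq> PiE (- {l0}) (\<lambda>_. {0..L})"
  proof (rule image_subsetI)
    fix j :: "'n \<Rightarrow> nat" assume "j \<in> ?J"
    then have "j \<in> PiE UNIV (\<lambda>_. {0..L})" using levels_subset_PiE by blast
    then show "restrict j (- {l0}) \<in> PiE (- {l0}) (\<lambda>_. {0..L})" by (auto simp: PiE_UNIV_domain Pi_def)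
  qed
  then have "card ?J \<le> card (PiE (- {l0}) (\<lambda>_::'n. {0..L}))"
    using card_inj_on_le[OF inj] by (simp add: finite_PiE)
  also have "\<dots> = (L + 1) ^ (CARD('n) - 1)"
    by (simp add: card_PiE Compl_eq_Diff_UNIV card_Diff_singleton)
  finally show ?thesis .
qed

lemma summable_poly_times_geometric:
  fixes x :: real
  assumes x: "0 \<le> x" "x < 1"
  shows "summable (\<lambda>r. real (r + 1) ^ n * x ^ r)"
proof (cases "x = 0")
  case True
  then show ?thesis by (intro summable_finite[of "{0}"]) auto
next
  case False
  then have "x > 0" using x by simp
  define c where "c = (1 + x) / 2"
  have "c < 1" "x < c" unfolding c_def using x by auto
  have lim: "(\<lambda>r. real (Suc (Suc r)) / real (Suc r)) \<longlonglongrightarrow> 1"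
    using LIMSEQ_Suc[OF LIMSEQ_Suc_n_over_n] by simp
  have "(\<lambda>r. (real (Suc (Suc r)) / real (Suc r)) ^ n) \<longlonglongrightarrow> 1"
    using tendsto_power[OF lim, of n] by simp
  moreover have "1 < c / x" using \<open>x < c\<close> \<open>x > 0\<close> by simp
  ultimately have "eventually (\<lambda>r. (real (Suc (Suc r)) / real (Suc r)) ^ n < c / x) sequentially"
    by (rule order_tendstoD(2))
  then obtain N where N: "\<And>r. r \<ge> N \<Longrightarrow> (real (Suc (Suc r)) / real (Suc r)) ^ n < c / x"
    unfolding eventually_sequentially by blast
  show ?thesis
  proof (rule summable_ratio_test[OF \<open>c < 1\<close>, of N])
    fix r assume "r \<ge> N"
    have "real (Suc r + 1) ^ n * x ^ Suc r
        = ((real (Suc (Suc r)) / real (Suc r)) ^ n * x) * (real (r + 1) ^ n * x ^ r)"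
      by (simp add: power_divide field_simps)
    also have "\<dots> \<le> c * (real (r + 1) ^ n * x ^ r)"
      using N[OF \<open>r \<ge> N\<close>] \<open>x > 0\<close> by (intro mult_right_mono) (auto simp: field_simps)
    finally show "norm (real (Suc r + 1) ^ n * x ^ Suc r) \<le> c * norm (real (r + 1) ^ n * x ^ r)"
      using x by simp
  qed
qed

definition poly_geometric_sum :: "real \<Rightarrow> nat \<Rightarrow> real" where
  "poly_geometric_sum x n = (\<Sum>r. real (r + 1) ^ n * x ^ r)"

lemma poly_geometric_sum_nonneg: "0 \<le> x \<Longrightarrow> x < 1 \<Longrightarrow> poly_geometric_sum x n \<ge> 0"
  unfolding poly_geometric_sum_def by (intro suminf_nonneg summable_poly_times_geometric) auto

lemma sum_shifted_le_suminf:
  fixes h :: "nat \<Rightarrow> real"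
  assumes "summable h" "\<And>n. h n \<ge> 0" "finite T" "\<And>L. L \<in> T \<Longrightarrow> L0 \<le> L"
  shows "(\<Sum>L\<in>T. h (L - L0)) \<le> suminf h"
proof -
  have "inj_on (\<lambda>L. L - L0) T" by (intro inj_onI) (metis assms(4) le_add_diff_inverse)
  then have "(\<Sum>L\<in>T. h (L - L0)) = (\<Sum>r\<in>(\<lambda>L. L - L0) ` T. h r)" by (simp add: sum.reindex)
  also have "\<dots> \<le> suminf h" using assms by (intro sum_le_suminf) auto
  finally show ?thesis .
qed

lemma poly_times_powr_le_shifted:
  fixes b \<gamma> :: real
  assumes b: "b > 0" and L: "L0 \<le> L"
  shows "real (L + 1) ^ n * b powr (-\<gamma> * real L)
    \<le> real (L0 + 1) ^ n * b powr (-\<gamma> * real L0) * (real (L - L0 + 1) ^ n * (b powr (-\<gamma>)) ^ (L - L0))"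
proof -
  obtain r where r: "L = L0 + r" using le_Suc_ex[OF L] by blast
  have "L + 1 \<le> (L0 + 1) * (L - L0 + 1)" unfolding r by (simp add: algebra_simps)
  then have "real (L + 1) \<le> real (L0 + 1) * real (L - L0 + 1)" by (metis of_nat_le_iff of_nat_mult)
  then have "real (L + 1) ^ n * b powr (-\<gamma> * real L)
      \<le> (real (L0 + 1) * real (L - L0 + 1)) ^ n * b powr (-\<gamma> * real L)"
    by (intro mult_right_mono power_mono) simp_all
  moreover have "b powr (-\<gamma> * real L) = b powr (-\<gamma> * real L0) * (b powr (-\<gamma>)) ^ (L - L0)"
  proof -
    have "(b powr (-\<gamma>)) ^ (L - L0) = b powr (-\<gamma> * real r)"
      unfolding r using b by (simp add: powr_realpow[symmetric] powr_powr mult.commute)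
    then show ?thesis unfolding r by (simp add: powr_add[symmetric] distrib_left)
  qed
  ultimately show ?thesis by (simp add: power_mult_distrib mult_ac)
qed

text \<open>Group the levels by their order L \<ge> L0; there are at most (L + 1)^(s-1) of order L.\<close>

lemma sum_levels_powr_le:
  fixes J :: "('n::finite \<Rightarrow> nat) set"
  assumes b: "b > 1" and \<gamma>: "\<gamma> > 0" and J: "finite J" and L0: "\<And>j. j \<in> J \<Longrightarrow> L0 \<le> sum j UNIV"
  shows "(\<Sum>j\<in>J. b powr (-\<gamma> * real (sum j UNIV)))
          \<le> poly_geometric_sum (b powr (-\<gamma>)) (CARD('n) - 1) * real (L0 + 1) ^ (CARD('n) - 1) * b powr (-\<gamma> * real L0)"
proof -
  define n where "n = CARD('n) - 1"
  define x where "x = b powr (-\<gamma>)"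
  define h where "h r = real (r + 1) ^ n * x ^ r" for r
  define T where "T = (\<lambda>j. sum j UNIV) ` J"
  have x: "0 \<le> x" "x < 1" unfolding x_def using b \<gamma> by (auto intro!: powr_less_one)
  have T: "finite T" "\<And>L. L \<in> T \<Longrightarrow> L0 \<le> L" unfolding T_def using J L0 by auto
  have "(\<Sum>j\<in>J. b powr (-\<gamma> * real (sum j UNIV)))
      = (\<Sum>L\<in>T. \<Sum>j\<in>{j \<in> J. sum j UNIV = L}. b powr (-\<gamma> * real (sum j UNIV)))"
    unfolding T_def by (rule sum.group[OF J finite_imageI[OF J] subset_refl, symmetric])
  also have "\<dots> = (\<Sum>L\<in>T. real (card {j \<in> J. sum j UNIV = L}) * b powr (-\<gamma> * real L))"
    by (intro sum.cong refl) simp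
  also have "\<dots> \<le> (\<Sum>L\<in>T. real (L + 1) ^ n * b powr (-\<gamma> * real L))"
  proof (intro sum_mono mult_right_mono)
    fix L
    have "card {j \<in> J. sum j UNIV = L} \<le> card {j :: 'n \<Rightarrow> nat. sum j UNIV = L}"
      by (intro card_mono finite_levels) auto
    also have "\<dots> \<le> (L + 1) ^ n" unfolding n_def by (rule card_levels_le)
    finally show "real (card {j \<in> J. sum j UNIV = L}) \<le> real (L + 1) ^ n"
      by (metis of_nat_le_iff of_nat_power)
  qed simp
  also have "\<dots> \<le> (\<Sum>L\<in>T. real (L0 + 1) ^ n * b powr (-\<gamma> * real L0) * h (L - L0))"
    unfolding h_def x_def using T b by (intro sum_mono poly_times_powr_le_shifted) auto
  also have "\<dots> \<le> real (L0 + 1) ^ n * b powr (-\<gamma> * real L0) * suminf h"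
    unfolding sum_distrib_left[symmetric] using summable_poly_times_geometric[OF x, of n] x T
    by (intro mult_left_mono sum_shifted_le_suminf) (auto simp: h_def)
  finally show ?thesis unfolding poly_geometric_sum_def h_def x_def n_def by (simp add: mult_ac)
qed

lemma wav_level_weighted_nonneg: "b > 0 \<Longrightarrow> wav_level_weighted b \<alpha> p f j \<ge> 0"
  unfolding wav_level_weighted_def using level_norm_nonneg[of b p f j] by simp

lemma wav_level_weighted_le_1_infinity:
  assumes "f \<in> wav_space b \<alpha> p \<infinity>" and "wav_norm b \<alpha> p \<infinity> f \<le> 1"
  shows "wav_level_weighted b \<alpha> p f j \<le> 1"
proof -
  have "bdd_above (range (wav_level_weighted b \<alpha> p f))" using assms(1) unfolding wav_space_def by simp
  then have "wav_level_weighted b \<alpha> p f j \<le> (SUP j. wav_level_weighted b \<alpha> p f j)" by (rule cSUP_upper[OF UNIV_I])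
  also have "\<dots> \<le> 1" using assms(2) unfolding wav_norm_def by simp
  finally show ?thesis .
qed

lemma wav_term_eq_sum_levels:
  fixes f :: "real^'n::finite \<Rightarrow> real"
  assumes b: "b > 0"
  shows "wav_term b \<alpha> p q f L = (\<Sum>j\<in>{j. sum j UNIV = L}. wav_level_weighted b \<alpha> p f j powr real_of_ereal q)"
proof -
  have "wav_level_weighted b \<alpha> p f j powr real_of_ereal q =
      real b powr (real_of_ereal q * (\<alpha> - einv p + 1/2) * real L) * level_norm b p f j powr real_of_ereal q"
    if "sum j UNIV = L" for j
    using that level_norm_nonneg[OF b, of p f j] b
    by (simp add: wav_level_weighted_def powr_mult powr_powr mult_ac)
  then show ?thesis unfolding wav_term_def by (simp add: sum_distrib_left)
qed

lemma sum_wav_level_weighted_powr_le_1: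
  fixes f :: "real^'n::finite \<Rightarrow> real" and J :: "('n \<Rightarrow> nat) set"
  assumes b: "b > 0" and q: "q \<ge> 1" "q \<noteq> \<infinity>" and f: "f \<in> wav_space b \<alpha> p q"
    and norm: "wav_norm b \<alpha> p q f \<le> 1" and J: "finite J"
  shows "(\<Sum>j\<in>J. wav_level_weighted b \<alpha> p f j powr real_of_ereal q) \<le> 1"
proof -
  define r where "r = real_of_ereal q"
  define T where "T = (\<lambda>j. sum j UNIV) ` J"
  have "r \<ge> 1" unfolding r_def using q real_of_ereal_ge_1 by blast
  have summable: "summable (wav_term b \<alpha> p q f)" using f q unfolding wav_space_def by simp
  have term_nonneg: "wav_term b \<alpha> p q f L \<ge> 0" for L
    unfolding wav_term_eq_sum_levels[OF b] by (intro sum_nonneg) simp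
  have "(\<Sum>j\<in>J. wav_level_weighted b \<alpha> p f j powr r)
      = (\<Sum>L\<in>T. \<Sum>j\<in>{j \<in> J. sum j UNIV = L}. wav_level_weighted b \<alpha> p f j powr r)"
    unfolding T_def by (rule sum.group[OF J finite_imageI[OF J] subset_refl, symmetric])
  also have "\<dots> \<le> (\<Sum>L\<in>T. wav_term b \<alpha> p q f L)"
    unfolding wav_term_eq_sum_levels[OF b] r_def
    by (intro sum_mono sum_mono2 finite_levels) auto
  also have "\<dots> \<le> suminf (wav_term b \<alpha> p q f)"
    using J term_nonneg unfolding T_def by (intro sum_le_suminf[OF summable]) auto
  also have "\<dots> \<le> 1"
  proof (rule ccontr)
    assume "\<not> ?thesis"
    then have "1 powr (1 / r) < suminf (wav_term b \<alpha> p q f) powr (1 / r)"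
      using \<open>r \<ge> 1\<close> by (intro powr_less_mono2) auto
    then show False using norm q unfolding wav_norm_def r_def by simp
  qed
  finally show ?thesis unfolding r_def .
qed

text \<open>Here q / (q - 1) is the conjugate exponent q' of q.\<close>

definition level_sum_const :: "nat \<Rightarrow> real \<Rightarrow> ereal \<Rightarrow> ereal \<Rightarrow> nat \<Rightarrow> real" where
  "level_sum_const b \<alpha> p q s =
    (if q = \<infinity> then poly_geometric_sum (real b powr (-(\<alpha> - einv p))) (s - 1)
     else if q = 1 then 1
     else poly_geometric_sum (real b powr (-((\<alpha> - einv p) * (real_of_ereal q / (real_of_ereal q - 1))))) (s - 1)
            powr (1 - einv q))"

lemma level_sum_const_nonneg:
  assumes b: "b \<ge> 2" and \<alpha>: "q > 1 \<longrightarrow> \<alpha> > einv p"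
  shows "level_sum_const b \<alpha> p q s \<ge> 0"
proof -
  have "real b powr (-(\<alpha> - einv p)) < 1" if "q = \<infinity>" using b \<alpha> that by (intro powr_less_one) auto
  then show ?thesis unfolding level_sum_const_def by (auto intro: poly_geometric_sum_nonneg)
qed

lemma sum_levels_weighted_le_Holder:
  fixes f :: "real^'n::finite \<Rightarrow> real" and J :: "('n \<Rightarrow> nat) set"
  assumes b: "b \<ge> 2" and q: "1 < q" "q \<noteq> \<infinity>" and \<alpha>: "\<alpha> > einv p"
    and f: "f \<in> wav_space b \<alpha> p q" and norm: "wav_norm b \<alpha> p q f \<le> 1"
    and J: "finite J" and L0: "\<And>j. j \<in> J \<Longrightarrow> L0 \<le> sum j UNIV"
  shows "(\<Sum>j\<in>J. real b powr (-(\<alpha> - einv p) * real (sum j UNIV)) * wav_level_weighted b \<alpha> p f j)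
     \<le> level_sum_const b \<alpha> p q CARD('n) * real (L0 + 1) powr (real (CARD('n) - 1) * (1 - einv q)) *
        real b powr (-(\<alpha> - einv p) * real L0)"
proof -
  define r where "r = real_of_ereal q"
  define r' where "r' = r / (r - 1)"
  let ?\<delta> = "\<alpha> - einv p" and ?W = "wav_level_weighted b \<alpha> p f" and ?n = "CARD('n) - 1"
  define K where "K = poly_geometric_sum (real b powr (-(?\<delta> * r'))) ?n"
  have "r > 1" unfolding r_def using q by (cases q) auto
  then have r': "r' > 1" "1/r' + 1/r = 1" unfolding r'_def by (simp_all add: field_simps)
  have "einv q = 1/r" using q unfolding einv_def r_def by simp
  then have "1/r' = 1 - einv q" using r'(2) by simp
  have "?\<delta> * r' > 0" using \<alpha> r'(1) by simp
  have "K \<ge> 0" unfolding K_def using b \<open>?\<delta> * r' > 0\<close> by (intro poly_geometric_sum_nonneg powr_less_one) auto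
  have "(\<Sum>j\<in>J. real b powr (-?\<delta> * real (sum j UNIV)) * ?W j)
      \<le> (\<Sum>j\<in>J. (real b powr (-?\<delta> * real (sum j UNIV))) powr r') powr (1/r') * (\<Sum>j\<in>J. ?W j powr r) powr (1/r)"
    using wav_level_weighted_nonneg[of b \<alpha> p f] b
    by (intro Holder_inequality_sum[OF J r'(1) \<open>r > 1\<close> r'(2)]) simp_all
  also have "\<dots> \<le> (K * real (L0 + 1) ^ ?n * real b powr (-(?\<delta> * r') * real L0)) powr (1/r') * 1"
  proof (rule mult_mono)
    have "(\<Sum>j\<in>J. (real b powr (-?\<delta> * real (sum j UNIV))) powr r')
        = (\<Sum>j\<in>J. real b powr (-(?\<delta> * r') * real (sum j UNIV)))"
      by (simp add: powr_powr algebra_simps)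
    also have "\<dots> \<le> K * real (L0 + 1) ^ ?n * real b powr (-(?\<delta> * r') * real L0)"
      unfolding K_def using b \<open>?\<delta> * r' > 0\<close> J L0 by (intro sum_levels_powr_le) auto
    finally show "(\<Sum>j\<in>J. (real b powr (-?\<delta> * real (sum j UNIV))) powr r') powr (1/r')
        \<le> (K * real (L0 + 1) ^ ?n * real b powr (-(?\<delta> * r') * real L0)) powr (1/r')"
      using r'(1) by (intro powr_mono2) (auto intro: sum_nonneg)
    have "(\<Sum>j\<in>J. ?W j powr r) \<le> 1"
      unfolding r_def using b q f norm J by (intro sum_wav_level_weighted_powr_le_1) auto
    moreover have "0 \<le> (\<Sum>j\<in>J. ?W j powr r)" by (intro sum_nonneg) simp
    ultimately show "(\<Sum>j\<in>J. ?W j powr r) powr (1/r) \<le> 1"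
      using \<open>r > 1\<close> by (intro powr_le1) auto
  qed (auto intro: sum_nonneg)
  also have "\<dots> = K powr (1/r') * real (L0 + 1) powr (real ?n * (1/r')) * real b powr (-?\<delta> * real L0)"
  proof -
    have "(real (L0 + 1) ^ ?n) powr (1/r') = real (L0 + 1) powr (real ?n * (1/r'))"
      by (simp add: powr_powr flip: powr_realpow)
    moreover have "(real b powr (-(?\<delta> * r') * real L0)) powr (1/r') = real b powr (-?\<delta> * real L0)"
      using r'(1) by (simp add: powr_powr algebra_simps)
    ultimately show ?thesis using \<open>K \<ge> 0\<close> by (simp add: powr_mult)
  qed
  also have "K powr (1/r') = level_sum_const b \<alpha> p q CARD('n)"
    using q unfolding level_sum_const_def K_def r'_def r_def \<open>1/r' = 1 - einv q\<close>[symmetric] by simp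
  finally show ?thesis unfolding \<open>1/r' = 1 - einv q\<close> .
qed

lemma sum_levels_weighted_le:
  fixes f :: "real^'n::finite \<Rightarrow> real" and J :: "('n \<Rightarrow> nat) set"
  assumes b: "b \<ge> 2" and q: "q \<ge> 1"
    and \<alpha>: "q = 1 \<longrightarrow> \<alpha> \<ge> einv p" "q > 1 \<longrightarrow> \<alpha> > einv p"
    and f: "f \<in> wav_space b \<alpha> p q" and norm: "wav_norm b \<alpha> p q f \<le> 1"
    and J: "finite J" and L0: "\<And>j. j \<in> J \<Longrightarrow> L0 \<le> sum j UNIV"
  shows "(\<Sum>j\<in>J. real b powr (-(\<alpha> - einv p) * real (sum j UNIV)) * wav_level_weighted b \<alpha> p f j)
     \<le> level_sum_const b \<alpha> p q CARD('n) * real (L0 + 1) powr (real (CARD('n) - 1) * (1 - einv q)) *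
        real b powr (-(\<alpha> - einv p) * real L0)"
proof -
  let ?\<delta> = "\<alpha> - einv p" and ?W = "wav_level_weighted b \<alpha> p f" and ?n = "CARD('n) - 1"
  have W: "?W j \<ge> 0" for j using b by (intro wav_level_weighted_nonneg) simp
  consider "q = \<infinity>" | "q = 1" | "1 < q" "q \<noteq> \<infinity>" using q by fastforce
  then show ?thesis
  proof cases
    case 1
    have "(\<Sum>j\<in>J. real b powr (-?\<delta> * real (sum j UNIV)) * ?W j) \<le> (\<Sum>j\<in>J. real b powr (-?\<delta> * real (sum j UNIV)))"
      using wav_level_weighted_le_1_infinity f norm W 1 by (intro sum_mono mult_left_le) auto
    also have "\<dots> \<le> poly_geometric_sum (real b powr (-?\<delta>)) ?n * real (L0 + 1) ^ ?n * real b powr (-?\<delta> * real L0)"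
      using b \<alpha>(2) 1 J L0 by (intro sum_levels_powr_le) auto
    also have "real (L0 + 1) ^ ?n = real (L0 + 1) powr (real ?n * (1 - einv q))"
      using 1 powr_realpow[of "real (L0 + 1)" ?n] by (simp only: einv_def if_True diff_zero mult_1_right) simp
    also have "poly_geometric_sum (real b powr (-?\<delta>)) ?n = level_sum_const b \<alpha> p q CARD('n)"
      using 1 by (simp add: level_sum_const_def)
    finally show ?thesis .
  next
    case 2
    have "real b powr (-?\<delta> * real (sum j UNIV)) \<le> real b powr (-?\<delta> * real L0)" if "j \<in> J" for j
      using b \<alpha>(1) 2 L0[OF that] by (intro powr_mono mult_left_mono_neg) (auto simp del: of_nat_sum)
    then have "(\<Sum>j\<in>J. real b powr (-?\<delta> * real (sum j UNIV)) * ?W j) \<le> (\<Sum>j\<in>J. real b powr (-?\<delta> * real L0) * ?W j)"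
      using W by (intro sum_mono mult_right_mono) auto
    also have "\<dots> \<le> real b powr (-?\<delta> * real L0) * 1"
    proof (unfold sum_distrib_left[symmetric], intro mult_left_mono)
      have "(\<Sum>j\<in>J. ?W j powr real_of_ereal q) \<le> 1"
        using b 2 by (intro sum_wav_level_weighted_powr_le_1[OF _ _ _ f norm J]) auto
      then show "(\<Sum>j\<in>J. ?W j) \<le> 1" using 2 W by simp
    qed simp
    finally show ?thesis using 2 by (simp add: level_sum_const_def einv_def)
  next
    case 3
    then show ?thesis using sum_levels_weighted_le_Holder b \<alpha>(2) f norm J L0 by blast
  qed
qed

section \<open>Absolute convergence of the wavelet series\<close>

lemma haar_all_eq_Sigma: "haar_all b = Sigma UNIV (haar_index b)"
  unfolding haar_all_def by auto

lemma sum_le_sum_levels: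
  fixes g :: "('n::finite \<Rightarrow> nat) \<times> ('n \<Rightarrow> nat) \<times> ('n \<Rightarrow> nat) \<Rightarrow> real"
  assumes F: "finite F" "F \<subseteq> haar_all b" and g: "\<And>y. g y \<ge> 0"
  shows "sum g F \<le> (\<Sum>j\<in>fst ` F. \<Sum>(i, k)\<in>haar_index b j. g (j, i, k))"
proof -
  have "F \<subseteq> Sigma (fst ` F) (haar_index b)" using F(2) unfolding haar_all_eq_Sigma by force
  then have "sum g F \<le> sum g (Sigma (fst ` F) (haar_index b))"
    using F(1) g by (intro sum_mono2) (auto intro: finite_haar_index)
  also have "\<dots> = (\<Sum>j\<in>fst ` F. \<Sum>(i, k)\<in>haar_index b j. g (j, i, k))"
    using F(1) by (subst sum.Sigma) (auto simp: finite_haar_index case_prod_beta')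
  finally show ?thesis .
qed

lemma summable_on_wav_series:
  fixes f :: "real^'n::finite \<Rightarrow> real" and x :: "real^'n"
  assumes b: "b \<ge> 2" and p: "p \<ge> 1" and q: "q \<ge> 1"
    and \<alpha>: "q = 1 \<longrightarrow> \<alpha> \<ge> einv p" "q > 1 \<longrightarrow> \<alpha> > einv p"
    and f: "f \<in> wav_space b \<alpha> p q" and norm: "wav_norm b \<alpha> p q f \<le> 1"
  shows "(\<lambda>(j, i, k). haar_coeff b f j i k * haar b j i k x) summable_on haar_all b"
proof -
  let ?G = "\<lambda>(j, i, k). haar_coeff b f j i k * haar b j i k x"
  have "sum (\<lambda>y. norm (?G y)) F \<le> real b ^ CARD('n) * level_sum_const b \<alpha> p q CARD('n)"
    if F: "finite F" "F \<subseteq> haar_all b" for F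
  proof -
    have "sum (\<lambda>y. norm (?G y)) F
        \<le> (\<Sum>j\<in>fst ` F. \<Sum>(i, k)\<in>haar_index b j. \<bar>haar_coeff b f j i k\<bar> * \<bar>haar b j i k x\<bar>)"
      using sum_le_sum_levels[OF F, of "\<lambda>y. norm (?G y)"] by (simp add: abs_mult)
    also have "\<dots> \<le> (\<Sum>j\<in>fst ` F. real b ^ CARD('n) *
        (real b powr (-(\<alpha> - einv p) * real (sum j UNIV)) * wav_level_weighted b \<alpha> p f j))"
      using b p by (intro sum_mono point_level_error_le) auto
    also have "\<dots> \<le> real b ^ CARD('n) * (level_sum_const b \<alpha> p q CARD('n) *
        real (0 + 1) powr (real (CARD('n) - 1) * (1 - einv q)) * real b powr (-(\<alpha> - einv p) * real 0))"
      unfolding sum_distrib_left[symmetric] using F(1)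
      by (intro mult_left_mono sum_levels_weighted_le[OF b q \<alpha> f norm]) auto
    finally show ?thesis using b by simp
  qed
  then have "Infinite_Sum.abs_summable_on ?G (haar_all b)"
    unfolding abs_summable_iff_bdd_above by (intro bdd_aboveI) auto
  then show ?thesis by (rule abs_summable_summable)
qed

section \<open>The quadrature error\<close>

lemma has_sum_finite_sum:
  fixes f :: "'x \<Rightarrow> 'y \<Rightarrow> real"
  assumes "finite P" and "\<And>x. x \<in> P \<Longrightarrow> (f x has_sum s x) A"
  shows "((\<lambda>y. \<Sum>x\<in>P. f x y) has_sum (\<Sum>x\<in>P. s x)) A"
  using assms by (induction P rule: finite_induct) (auto intro: has_sum_add)

definition qmc_haar_term :: "nat \<Rightarrow> nat \<Rightarrow> (real^'n::finite) set \<Rightarrow> (real^'n \<Rightarrow> real) \<Rightarrow>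
    ('n \<Rightarrow> nat) \<times> ('n \<Rightarrow> nat) \<times> ('n \<Rightarrow> nat) \<Rightarrow> real" where
  "qmc_haar_term b m P f = (\<lambda>(j, i, k). haar_coeff b f j i k * qmc b m P (haar b j i k))"

lemma has_sum_qmc_haar_term:
  fixes f :: "real^'n::finite \<Rightarrow> real"
  assumes b: "b \<ge> 2" and p: "p \<ge> 1" and q: "q \<ge> 1"
    and \<alpha>: "q = 1 \<longrightarrow> \<alpha> \<ge> einv p" "q > 1 \<longrightarrow> \<alpha> > einv p"
    and f: "f \<in> wav_space b \<alpha> p q" and norm: "wav_norm b \<alpha> p q f \<le> 1" and P: "finite P"
  shows "(qmc_haar_term b m P f has_sum qmc b m P (wav_series b f)) (haar_all b)"
proof -
  have "((\<lambda>y. \<Sum>x\<in>P. (\<lambda>(j, i, k). haar_coeff b f j i k * haar b j i k x) y) has_sum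
      (\<Sum>x\<in>P. wav_series b f x)) (haar_all b)"
    unfolding wav_series_def
    by (intro has_sum_finite_sum[OF P] has_sum_infsum summable_on_wav_series[OF b p q \<alpha> f norm])
  then have "((\<lambda>y. real b powr (- real m) * (\<Sum>x\<in>P. (\<lambda>(j, i, k). haar_coeff b f j i k * haar b j i k x) y))
      has_sum qmc b m P (wav_series b f)) (haar_all b)"
    unfolding qmc_def by (rule has_sum_cmult_right)
  moreover have "(\<lambda>y. real b powr (- real m) * (\<Sum>x\<in>P. (\<lambda>(j, i, k). haar_coeff b f j i k * haar b j i k x) y))
      = qmc_haar_term b m P f"
    unfolding fun_eq_iff qmc_haar_term_def qmc_def by (auto simp: sum_distrib_left[symmetric] mult.left_commute)
  ultimately show ?thesis by simp
qed

lemma qmc_haar_term_0: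
  fixes f :: "real^'n::finite \<Rightarrow> real"
  assumes net: "is_net b t m P" and b: "b \<ge> 2" and f: "integrable (lebesgue_on unit_cube) f"
  shows "qmc_haar_term b m P f ((\<lambda>_. 0), (\<lambda>_. 0), (\<lambda>_. 0)) = (LINT x|lebesgue_on unit_cube. f x)"
proof -
  have "haar b (\<lambda>_. 0) (\<lambda>_. 0) (\<lambda>_. 0) x = 1" if "x \<in> P" for x
    using net that unfolding is_net_def haar_def haar1_def by auto
  then have "qmc b m P (haar b (\<lambda>_. 0) (\<lambda>_. 0) (\<lambda>_. 0)) = real b powr (- real m) * real b ^ m"
    unfolding qmc_def using card_net[OF net b] by simp
  also have "\<dots> = 1" using b by (simp add: powr_minus powr_realpow field_simps)
  finally show ?thesis unfolding qmc_haar_term_def using haar_coeff_0_eq_integral[OF f] by simp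
qed

lemma sum_abs_qmc_haar_term_level:
  assumes "finite P"
  shows "(\<Sum>(i, k)\<in>haar_index b j. \<bar>qmc_haar_term b m P f (j, i, k)\<bar>) = real b powr (- real m) *
      (\<Sum>(i, k)\<in>haar_index b j. \<bar>haar_coeff b f j i k\<bar> * \<bar>\<Sum>x\<in>P. haar b j i k x\<bar>)"
proof -
  have "\<bar>qmc_haar_term b m P f (j, i, k)\<bar>
      = real b powr (- real m) * (\<bar>haar_coeff b f j i k\<bar> * \<bar>\<Sum>x\<in>P. haar b j i k x\<bar>)" for i k
    unfolding qmc_haar_term_def qmc_def by (simp add: abs_mult)
  then show ?thesis unfolding sum_distrib_left by (intro sum.cong refl) (auto split: prod.splits)
qed

lemma sum_abs_qmc_haar_term_level_le:
  fixes f :: "real^'n::finite \<Rightarrow> real" and P :: "(real^'n) set"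
  assumes net: "is_net b t m P" and b: "b \<ge> 2" and p: "p \<ge> 1" and j: "m - t < sum j UNIV"
  shows "(\<Sum>(i, k)\<in>haar_index b j. \<bar>qmc_haar_term b m P f (j, i, k)\<bar>)
    \<le> real b ^ (t + 2 * CARD('n)) * real b powr (- real m * einv p) *
       (real b powr (-(\<alpha> - einv p) * real (sum j UNIV)) * wav_level_weighted b \<alpha> p f j)"
proof -
  let ?E = "real b powr (-(\<alpha> - einv p) * real (sum j UNIV)) * wav_level_weighted b \<alpha> p f j"
  have "finite P" using net unfolding is_net_def by simp
  then have "(\<Sum>(i, k)\<in>haar_index b j. \<bar>qmc_haar_term b m P f (j, i, k)\<bar>)
      \<le> real b powr (- real m) * (real b ^ (t + 2 * CARD('n)) * real b powr (real m * (1 - einv p)) * ?E)"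
    unfolding sum_abs_qmc_haar_term_level[OF \<open>finite P\<close>] using net_level_error_le[OF net b p j]
    by (intro mult_left_mono) auto
  also have "\<dots> = (real b powr (- real m) * real b powr (real m * (1 - einv p))) * real b ^ (t + 2 * CARD('n)) * ?E"
    by (simp only: mult_ac)
  also have "real b powr (- real m) * real b powr (real m * (1 - einv p)) = real b powr (- real m * einv p)"
    by (simp add: powr_add[symmetric] algebra_simps)
  finally show ?thesis by (simp only: mult_ac)
qed

text \<open>The net integrates all Haar functions of order 1 \<le> |j| \<le> m - t exactly, so only the
  finer levels contribute to the error.\<close>

lemma sum_abs_qmc_haar_term_le:
  fixes f :: "real^'n::finite \<Rightarrow> real" and P :: "(real^'n) set"
  assumes net: "is_net b t m P" and b: "b \<ge> 2" and p: "p \<ge> 1" and q: "q \<ge> 1"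
    and \<alpha>: "q = 1 \<longrightarrow> \<alpha> \<ge> einv p" "q > 1 \<longrightarrow> \<alpha> > einv p"
    and f: "f \<in> wav_space b \<alpha> p q" and norm: "wav_norm b \<alpha> p q f \<le> 1"
    and F: "finite F" "F \<subseteq> haar_all b - {((\<lambda>_. 0), (\<lambda>_. 0), (\<lambda>_. 0))}"
  shows "(\<Sum>y\<in>F. \<bar>qmc_haar_term b m P f y\<bar>)
    \<le> real b ^ (t + 2 * CARD('n)) * real b powr (- real m * einv p) *
       (level_sum_const b \<alpha> p q CARD('n) * real (m - t + 1 + 1) powr (real (CARD('n) - 1) * (1 - einv q)) *
        real b powr (-(\<alpha> - einv p) * real (m - t + 1)))"
proof -
  let ?T = "qmc_haar_term b m P f" and ?c = "real b ^ (t + 2 * CARD('n)) * real b powr (- real m * einv p)"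
  let ?E = "\<lambda>j. real b powr (-(\<alpha> - einv p) * real (sum j UNIV)) * wav_level_weighted b \<alpha> p f j"
  have "finite P" using net unfolding is_net_def by simp
  have nonzero: "1 \<le> sum j UNIV" if j: "j \<in> fst ` F" for j
  proof (rule ccontr)
    assume "\<not> 1 \<le> sum j UNIV"
    then have "sum j UNIV = 0" by linarith
    then have "j = (\<lambda>_. 0)" by (simp add: fun_eq_iff)
    moreover obtain i k where "(j, i, k) \<in> F" using j by force
    moreover have "(i, k) \<in> haar_index b (\<lambda>_. 0) \<Longrightarrow> i = (\<lambda>_. 0) \<and> k = (\<lambda>_. 0)"
      unfolding haar_index_def nabla_def Delta_def by (auto simp: fun_eq_iff)
    ultimately show False using F(2) unfolding haar_all_def by auto
  qed
  have coarse_0: "(\<Sum>(i, k)\<in>haar_index b j. \<bar>?T (j, i, k)\<bar>) = 0"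
    if "j \<in> fst ` F" "\<not> m - t < sum j UNIV" for j
    unfolding sum_abs_qmc_haar_term_level[OF \<open>finite P\<close>] using nonzero[OF that(1)] that(2)
    by (intro mult_eq_0_iff[THEN iffD2] disjI2 sum.neutral) (auto simp: sum_haar_net_eq_0[OF net b])
  have "(\<Sum>y\<in>F. \<bar>?T y\<bar>) \<le> (\<Sum>j\<in>fst ` F. \<Sum>(i, k)\<in>haar_index b j. \<bar>?T (j, i, k)\<bar>)"
    using F by (intro sum_le_sum_levels) auto
  also have "\<dots> = (\<Sum>j\<in>{j \<in> fst ` F. m - t < sum j UNIV}. \<Sum>(i, k)\<in>haar_index b j. \<bar>?T (j, i, k)\<bar>)"
    using F(1) coarse_0 by (intro sum.mono_neutral_right) auto
  also have "\<dots> \<le> (\<Sum>j\<in>{j \<in> fst ` F. m - t < sum j UNIV}. ?c * ?E j)"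
    by (intro sum_mono sum_abs_qmc_haar_term_level_le[OF net b p]) simp
  also have "\<dots> \<le> ?c * (level_sum_const b \<alpha> p q CARD('n) *
      real (m - t + 1 + 1) powr (real (CARD('n) - 1) * (1 - einv q)) * real b powr (-(\<alpha> - einv p) * real (m - t + 1)))"
    unfolding sum_distrib_left[symmetric] using F(1)
    by (intro mult_left_mono sum_levels_weighted_le[OF b q \<alpha> f norm]) auto
  finally show ?thesis .
qed

lemma qmc_error_le:
  fixes f :: "real^'n::finite \<Rightarrow> real" and P :: "(real^'n) set"
  assumes net: "is_net b t m P" and b: "b \<ge> 2" and p: "p \<ge> 1" and q: "q \<ge> 1"
    and \<alpha>: "q = 1 \<longrightarrow> \<alpha> \<ge> einv p" "q > 1 \<longrightarrow> \<alpha> > einv p"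
    and f: "f \<in> wav_space b \<alpha> p q" and norm: "wav_norm b \<alpha> p q f \<le> 1"
  shows "\<bar>(LINT x|lebesgue_on unit_cube. f x) - qmc b m P (wav_series b f)\<bar>
    \<le> real b ^ (t + 2 * CARD('n)) * real b powr (- real m * einv p) *
       (level_sum_const b \<alpha> p q CARD('n) * real (m - t + 1 + 1) powr (real (CARD('n) - 1) * (1 - einv q)) *
        real b powr (-(\<alpha> - einv p) * real (m - t + 1)))"
    (is "_ \<le> ?B")
proof -
  let ?T = "qmc_haar_term b m P f" and ?y0 = "((\<lambda>_. 0), (\<lambda>_. 0), (\<lambda>_. 0)) :: ('n \<Rightarrow> nat) \<times> _"
  let ?Y = "haar_all b - {?y0}"
  have "finite P" using net unfolding is_net_def by simp
  then have sum_T: "(?T has_sum qmc b m P (wav_series b f)) (haar_all b)"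
    by (rule has_sum_qmc_haar_term[OF b p q \<alpha> f norm])
  then have summable_T: "?T summable_on ?Y"
    by (rule summable_on_subset[OF has_sum_imp_summable]) auto
  have "?y0 \<in> haar_all b" using zero_in_haar_index[of b "\<lambda>_. 0"] b unfolding haar_all_def by auto
  then have "qmc b m P (wav_series b f) = infsum ?T (insert ?y0 ?Y)"
    using infsumI[OF sum_T] by (simp add: insert_absorb)
  also have "\<dots> = ?T ?y0 + infsum ?T ?Y" by (rule infsum_insert[OF summable_T]) simp
  finally have "qmc b m P (wav_series b f) = ?T ?y0 + infsum ?T ?Y" .
  moreover have "?T ?y0 = (LINT x|lebesgue_on unit_cube. f x)"
    using f unfolding wav_space_def by (intro qmc_haar_term_0[OF net b]) simp
  ultimately have "\<bar>(LINT x|lebesgue_on unit_cube. f x) - qmc b m P (wav_series b f)\<bar> = \<bar>infsum ?T ?Y\<bar>"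
    by simp
  also have "\<dots> \<le> infsum (\<lambda>y. \<bar>?T y\<bar>) ?Y"
    using norm_infsum_bound[of ?T ?Y] summable_T summable_on_iff_abs_summable_on_real by auto
  also have "\<dots> \<le> ?B"
    using summable_T summable_on_iff_abs_summable_on_real
    by (intro infsum_le_finite_sums sum_abs_qmc_haar_term_le[OF net b p q \<alpha> f norm]) auto
  finally show ?thesis .
qed

text \<open>In terms of N = b^m: b^(-\<alpha> m) = N^(-\<alpha>) and m - t + 2 \<le> 3 m = (3 / ln b) ln N.\<close>

lemma qmc_error_le_ln:
  fixes f :: "real^'n::finite \<Rightarrow> real" and P :: "(real^'n) set"
  assumes net: "is_net b t m P" and m: "m \<ge> 1" and b: "b \<ge> 2" and p: "p \<ge> 1" and q: "q \<ge> 1"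
    and \<alpha>: "q = 1 \<longrightarrow> \<alpha> \<ge> einv p" "q > 1 \<longrightarrow> \<alpha> > einv p"
    and f: "f \<in> wav_space b \<alpha> p q" and norm: "wav_norm b \<alpha> p q f \<le> 1"
  defines "e \<equiv> real (CARD('n) - 1) * (1 - einv q)"
  shows "\<bar>(LINT x|lebesgue_on unit_cube. f x) - qmc b m P (wav_series b f)\<bar>
    \<le> real b ^ (t + 2 * CARD('n)) * level_sum_const b \<alpha> p q CARD('n) *
       real b powr ((\<alpha> - einv p) * real t) * (3 / ln (real b)) powr e *
       real (b ^ m) powr (- \<alpha>) * ln (real (b ^ m)) powr e"
proof -
  let ?\<delta> = "\<alpha> - einv p" and ?C = "level_sum_const b \<alpha> p q CARD('n)"
  have "t \<le> m" using net unfolding is_net_def by simp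
  have "ln (real b) > 0" using b by simp
  have "?\<delta> \<ge> 0" using \<alpha> q by (cases "q = 1") auto
  have "e \<ge> 0" unfolding e_def using einv_bounds[OF q] by simp
  have ln_N: "ln (real (b ^ m)) = real m * ln (real b)" using b by (simp add: ln_realpow)
  have "real (m - t + 1 + 1) powr e \<le> ((3 / ln (real b)) * ln (real (b ^ m))) powr e"
    using m \<open>t \<le> m\<close> \<open>e \<ge> 0\<close> \<open>ln (real b) > 0\<close> unfolding ln_N by (intro powr_mono2) auto
  also have "\<dots> = (3 / ln (real b)) powr e * ln (real (b ^ m)) powr e"
    by (rule powr_mult)
  finally have "real (m - t + 1 + 1) powr e \<le> (3 / ln (real b)) powr e * ln (real (b ^ m)) powr e" .
  moreover have "real b powr (-?\<delta> * real (m - t + 1)) \<le> real b powr (-?\<delta> * real m) * real b powr (?\<delta> * real t)"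
    using b \<open>?\<delta> \<ge> 0\<close> \<open>t \<le> m\<close> by (simp add: powr_add[symmetric] of_nat_diff algebra_simps)
  moreover have "?C \<ge> 0" using b \<alpha>(2) by (rule level_sum_const_nonneg)
  ultimately have "real b ^ (t + 2 * CARD('n)) * real b powr (- real m * einv p) *
       (?C * real (m - t + 1 + 1) powr e * real b powr (-?\<delta> * real (m - t + 1)))
    \<le> real b ^ (t + 2 * CARD('n)) * real b powr (- real m * einv p) *
       (?C * ((3 / ln (real b)) powr e * ln (real (b ^ m)) powr e) *
        (real b powr (-?\<delta> * real m) * real b powr (?\<delta> * real t)))"
    by (intro mult_left_mono mult_mono) auto
  also have "\<dots> = real b ^ (t + 2 * CARD('n)) * ?C * real b powr (?\<delta> * real t) * (3 / ln (real b)) powr e *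
       (real b powr (- real m * einv p) * real b powr (-?\<delta> * real m)) * ln (real (b ^ m)) powr e"
    by (simp only: mult_ac)
  also have "real b powr (- real m * einv p) * real b powr (-?\<delta> * real m) = real (b ^ m) powr (- \<alpha>)"
    using b by (simp add: powr_add[symmetric] powr_realpow[symmetric] powr_powr algebra_simps)
  finally show ?thesis using qmc_error_le[OF net b p q \<alpha> f norm] unfolding e_def by linarith
qed

theorem theorem2:
  fixes b t :: nat and \<alpha> :: real and p q :: ereal
  assumes "b \<ge> 2" and "1 \<le> p" and "1 \<le> q"
    and "q = 1 \<longrightarrow> \<alpha> \<ge> einv p"
    and "q > 1 \<longrightarrow> \<alpha> > einv p"
  shows "\<exists>C. \<forall>m (P :: (real^'n::finite) set). m \<ge> 1 \<longrightarrow> is_net b t m P \<longrightarrow>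
           e_wor_wav b \<alpha> p q m P \<le>
             ereal (C * real (card P) powr (- \<alpha>) *
                    ln (real (card P)) powr (real (CARD('n) - 1) * (1 - einv q)))"
proof (intro exI allI impI)
  fix m and P :: "(real^'n) set"
  assume "m \<ge> 1" and net: "is_net b t m P"
  then show "e_wor_wav b \<alpha> p q m P \<le> ereal (real b ^ (t + 2 * CARD('n)) * level_sum_const b \<alpha> p q CARD('n) *
       real b powr ((\<alpha> - einv p) * real t) * (3 / ln (real b)) powr (real (CARD('n) - 1) * (1 - einv q)) *
       real (card P) powr (- \<alpha>) * ln (real (card P)) powr (real (CARD('n) - 1) * (1 - einv q)))"
    unfolding e_wor_wav_def card_net[OF net assms(1)]
    using qmc_error_le_ln[OF net _ assms] by (intro SUP_least) (auto simp: mult.assoc)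
qed

end
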